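(* Let $A\| B$ be a Frobenius extension such that $A_B$ is a generator, and let $E=\mathrm{End}(A_B)$ with $\lambda:A\to E$, $\lambda(a)(x)=ax$. If the extension $E\| A$ (via $\lambda$) is D2, then $A\| B$ is D2.
   Context: Algebras over a commutative ring $K$; an algebra extension $A\| B$ is a unit-preserving homomorphism $B\to A$. $A\| B$ is a Frobenius extension if $A_B$ is finitely generated projective and $A\cong\mathrm{Hom}(A_B,B_B)$ as $B$-$A$-bimodules. An extension $C\| D$ is right D2 if $C\otimes_DC$ is isomorphic as a $C$-$D$-bimodule to a direct summand of a finite direct sum $C^n$ of the natural bimodule, left D2 if the same holds as $D$-$C$-bimodules, and D2 if it is both left and right D2. *)

theory Defs
  imports "HOL-Algebra.Ring" "HOL-Algebra.RingHom"
begin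

(* Rings are HOL-Algebra rings (unital, not necessarily commutative).
   An extension C || D is a unit-preserving ring homomorphism iota : D -> C. *)

definition ring_ext :: "('c,'m) ring_scheme \<Rightarrow> ('d,'n) ring_scheme \<Rightarrow> ('d \<Rightarrow> 'c) \<Rightarrow> bool" where
  "ring_ext C D \<iota> \<longleftrightarrow> ring C \<and> ring D \<and> \<iota> \<in> ring_hom D C"

(* formal sums  sum_j k_j (x_j (x) y_j)  represented as lists of triples *)
definition tfree :: "('c,'m) ring_scheme \<Rightarrow> (int \<times> 'c \<times> 'c) list set" where
  "tfree C = {L. \<forall>(k,x,y)\<in>set L. x \<in> carrier C \<and> y \<in> carrier C}"

(* the element of the free abelian group on C x C represented by a list *)
definition tfsum :: "(int \<times> 'c \<times> 'c) list \<Rightarrow> ('c \<times> 'c \<Rightarrow> int)" where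
  "tfsum L = (\<lambda>p. sum_list (map (\<lambda>(k,x,y). if (x,y) = p then k else 0) L))"

inductive_set tens_null :: "('c,'m) ring_scheme \<Rightarrow> ('d,'n) ring_scheme \<Rightarrow> ('d \<Rightarrow> 'c) \<Rightarrow> ('c \<times> 'c \<Rightarrow> int) set"
  for C D \<iota> where
  zero: "(\<lambda>_. 0) \<in> tens_null C D \<iota>"
| addl: "\<lbrakk>x \<in> carrier C; y \<in> carrier C; z \<in> carrier C\<rbrakk> \<Longrightarrow>
     tfsum [(1, x \<oplus>\<^bsub>C\<^esub> y, z), (-1, x, z), (-1, y, z)] \<in> tens_null C D \<iota>"
| addr: "\<lbrakk>x \<in> carrier C; y \<in> carrier C; z \<in> carrier C\<rbrakk> \<Longrightarrow>
     tfsum [(1, x, y \<oplus>\<^bsub>C\<^esub> z), (-1, x, y), (-1, x, z)] \<in> tens_null C D \<iota>"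
| bal: "\<lbrakk>x \<in> carrier C; z \<in> carrier C; d \<in> carrier D\<rbrakk> \<Longrightarrow>
     tfsum [(1, x \<otimes>\<^bsub>C\<^esub> \<iota> d, z), (-1, x, \<iota> d \<otimes>\<^bsub>C\<^esub> z)] \<in> tens_null C D \<iota>"
| plus: "\<lbrakk>f \<in> tens_null C D \<iota>; g \<in> tens_null C D \<iota>\<rbrakk> \<Longrightarrow> (\<lambda>p. f p + g p) \<in> tens_null C D \<iota>"
| neg: "f \<in> tens_null C D \<iota> \<Longrightarrow> (\<lambda>p. - f p) \<in> tens_null C D \<iota>"

(* two formal sums represent the same element of C (x)_D C *)
definition tens_eq :: "('c,'m) ring_scheme \<Rightarrow> ('d,'n) ring_scheme \<Rightarrow> ('d \<Rightarrow> 'c)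
    \<Rightarrow> (int \<times> 'c \<times> 'c) list \<Rightarrow> (int \<times> 'c \<times> 'c) list \<Rightarrow> bool" where
  "tens_eq C D \<iota> L L' \<longleftrightarrow> tfsum L - tfsum L' \<in> tens_null C D \<iota>"

definition tlact :: "('c,'m) ring_scheme \<Rightarrow> 'c \<Rightarrow> (int \<times> 'c \<times> 'c) list \<Rightarrow> (int \<times> 'c \<times> 'c) list" where
  "tlact C c L = map (\<lambda>(k,x,y). (k, c \<otimes>\<^bsub>C\<^esub> x, y)) L"

definition tract :: "('c,'m) ring_scheme \<Rightarrow> 'c \<Rightarrow> (int \<times> 'c \<times> 'c) list \<Rightarrow> (int \<times> 'c \<times> 'c) list" where
  "tract C c L = map (\<lambda>(k,x,y). (k, x, y \<otimes>\<^bsub>C\<^esub> c)) L"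

definition vadd :: "('c,'m) ring_scheme \<Rightarrow> nat \<Rightarrow> (nat \<Rightarrow> 'c) \<Rightarrow> (nat \<Rightarrow> 'c) \<Rightarrow> (nat \<Rightarrow> 'c)" where
  "vadd C n v w = (\<lambda>i\<in>{..<n}. v i \<oplus>\<^bsub>C\<^esub> w i)"

definition vlmul :: "('c,'m) ring_scheme \<Rightarrow> nat \<Rightarrow> 'c \<Rightarrow> (nat \<Rightarrow> 'c) \<Rightarrow> (nat \<Rightarrow> 'c)" where
  "vlmul C n c v = (\<lambda>i\<in>{..<n}. c \<otimes>\<^bsub>C\<^esub> v i)"

definition vrmul :: "('c,'m) ring_scheme \<Rightarrow> nat \<Rightarrow> (nat \<Rightarrow> 'c) \<Rightarrow> 'c \<Rightarrow> (nat \<Rightarrow> 'c)" where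
  "vrmul C n v c = (\<lambda>i\<in>{..<n}. v i \<otimes>\<^bsub>C\<^esub> c)"

(* F induces a well-defined S-R-bimodule map T = C (x)_D C -> C^n (S acting on the left,
   R on the right, both subsets of C), G : C^n -> T is an S-R-bimodule map (given on
   representatives), and G o F = id_T.  I.e. T is isomorphic, as S-R-bimodule, to a direct
   summand of C^n. *)
definition tensor_summand :: "('c,'m) ring_scheme \<Rightarrow> ('d,'n) ring_scheme \<Rightarrow> ('d \<Rightarrow> 'c)
    \<Rightarrow> 'c set \<Rightarrow> 'c set \<Rightarrow> nat
    \<Rightarrow> ((int \<times> 'c \<times> 'c) list \<Rightarrow> (nat \<Rightarrow> 'c)) \<Rightarrow> ((nat \<Rightarrow> 'c) \<Rightarrow> (int \<times> 'c \<times> 'c) list) \<Rightarrow> bool" where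
  "tensor_summand C D \<iota> S R n F G \<longleftrightarrow>
     (\<forall>L\<in>tfree C. F L \<in> {..<n} \<rightarrow>\<^sub>E carrier C)
   \<and> (\<forall>L\<in>tfree C. \<forall>L'\<in>tfree C. tens_eq C D \<iota> L L' \<longrightarrow> F L = F L')
   \<and> (\<forall>L\<in>tfree C. \<forall>L'\<in>tfree C. F (L @ L') = vadd C n (F L) (F L'))
   \<and> (\<forall>s\<in>S. \<forall>L\<in>tfree C. F (tlact C s L) = vlmul C n s (F L))
   \<and> (\<forall>r\<in>R. \<forall>L\<in>tfree C. F (tract C r L) = vrmul C n (F L) r)
   \<and> (\<forall>v\<in>{..<n} \<rightarrow>\<^sub>E carrier C. G v \<in> tfree C)
   \<and> (\<forall>v\<in>{..<n} \<rightarrow>\<^sub>E carrier C. \<forall>w\<in>{..<n} \<rightarrow>\<^sub>E carrier C.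
        tens_eq C D \<iota> (G (vadd C n v w)) (G v @ G w))
   \<and> (\<forall>s\<in>S. \<forall>v\<in>{..<n} \<rightarrow>\<^sub>E carrier C. tens_eq C D \<iota> (G (vlmul C n s v)) (tlact C s (G v)))
   \<and> (\<forall>r\<in>R. \<forall>v\<in>{..<n} \<rightarrow>\<^sub>E carrier C. tens_eq C D \<iota> (G (vrmul C n v r)) (tract C r (G v)))
   \<and> (\<forall>L\<in>tfree C. tens_eq C D \<iota> (G (F L)) L)"

(* C (x)_D C is a C-D-direct summand of some C^n *)
definition right_D2 :: "('c,'m) ring_scheme \<Rightarrow> ('d,'n) ring_scheme \<Rightarrow> ('d \<Rightarrow> 'c) \<Rightarrow> bool" where
  "right_D2 C D \<iota> \<longleftrightarrow> (\<exists>n F G. tensor_summand C D \<iota> (carrier C) (\<iota> ` carrier D) n F G)"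

(* C (x)_D C is a D-C-direct summand of some C^n *)
definition left_D2 :: "('c,'m) ring_scheme \<Rightarrow> ('d,'n) ring_scheme \<Rightarrow> ('d \<Rightarrow> 'c) \<Rightarrow> bool" where
  "left_D2 C D \<iota> \<longleftrightarrow> (\<exists>n F G. tensor_summand C D \<iota> (\<iota> ` carrier D) (carrier C) n F G)"

definition D2 :: "('c,'m) ring_scheme \<Rightarrow> ('d,'n) ring_scheme \<Rightarrow> ('d \<Rightarrow> 'c) \<Rightarrow> bool" where
  "D2 C D \<iota> \<longleftrightarrow> ring_ext C D \<iota> \<and> right_D2 C D \<iota> \<and> left_D2 C D \<iota>"

definition rhom :: "'x set \<Rightarrow> ('x \<Rightarrow> 'x \<Rightarrow> 'x) \<Rightarrow> ('x \<Rightarrow> 'b \<Rightarrow> 'x)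
    \<Rightarrow> 'y set \<Rightarrow> ('y \<Rightarrow> 'y \<Rightarrow> 'y) \<Rightarrow> ('y \<Rightarrow> 'b \<Rightarrow> 'y) \<Rightarrow> 'b set \<Rightarrow> ('x \<Rightarrow> 'y) \<Rightarrow> bool" where
  "rhom X addX actX Y addY actY Bc f \<longleftrightarrow>
     (\<forall>x\<in>X. f x \<in> Y) \<and> (\<forall>x\<in>X. \<forall>x'\<in>X. f (addX x x') = addY (f x) (f x'))
   \<and> (\<forall>x\<in>X. \<forall>b\<in>Bc. f (actX x b) = actY (f x) b)"

definition actA :: "'a ring \<Rightarrow> ('b \<Rightarrow> 'a) \<Rightarrow> 'a \<Rightarrow> 'b \<Rightarrow> 'a" where
  "actA A \<iota> a b = a \<otimes>\<^bsub>A\<^esub> \<iota> b"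

definition pow_carrier :: "'x set \<Rightarrow> nat \<Rightarrow> (nat \<Rightarrow> 'x) set" where
  "pow_carrier X n = {..<n} \<rightarrow>\<^sub>E X"

definition pow_add :: "nat \<Rightarrow> ('x \<Rightarrow> 'x \<Rightarrow> 'x) \<Rightarrow> (nat \<Rightarrow> 'x) \<Rightarrow> (nat \<Rightarrow> 'x) \<Rightarrow> (nat \<Rightarrow> 'x)" where
  "pow_add n ad v w = (\<lambda>i\<in>{..<n}. ad (v i) (w i))"

definition pow_act :: "nat \<Rightarrow> ('x \<Rightarrow> 'b \<Rightarrow> 'x) \<Rightarrow> (nat \<Rightarrow> 'x) \<Rightarrow> 'b \<Rightarrow> (nat \<Rightarrow> 'x)" where
  "pow_act n ac v b = (\<lambda>i\<in>{..<n}. ac (v i) b)"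

definition fg_projective :: "'a ring \<Rightarrow> 'b ring \<Rightarrow> ('b \<Rightarrow> 'a) \<Rightarrow> bool" where
  "fg_projective A B \<iota> \<longleftrightarrow> (\<exists>n p s.
     rhom (pow_carrier (carrier B) n) (pow_add n (add B)) (pow_act n (mult B))
          (carrier A) (add A) (actA A \<iota>) (carrier B) p
   \<and> rhom (carrier A) (add A) (actA A \<iota>)
          (pow_carrier (carrier B) n) (pow_add n (add B)) (pow_act n (mult B)) (carrier B) s
   \<and> (\<forall>a\<in>carrier A. p (s a) = a))"

definition generator :: "'a ring \<Rightarrow> 'b ring \<Rightarrow> ('b \<Rightarrow> 'a) \<Rightarrow> bool" where
  "generator A B \<iota> \<longleftrightarrow> (\<exists>n q.
     rhom (pow_carrier (carrier A) n) (pow_add n (add A)) (pow_act n (actA A \<iota>))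
          (carrier B) (add B) (mult B) (carrier B) q
   \<and> q ` pow_carrier (carrier A) n = carrier B)"

definition HomAB :: "'a ring \<Rightarrow> 'b ring \<Rightarrow> ('b \<Rightarrow> 'a) \<Rightarrow> ('a \<Rightarrow> 'b) set" where
  "HomAB A B \<iota> = {h \<in> carrier A \<rightarrow>\<^sub>E carrier B.
     rhom (carrier A) (add A) (actA A \<iota>) (carrier B) (add B) (mult B) (carrier B) h}"

(* A_B f.g. projective and A \<cong> Hom(A_B,B_B) as B-A-bimodules, where
   (b.h.a)(x) = b h(a x) *)
definition frobenius_ext :: "'a ring \<Rightarrow> 'b ring \<Rightarrow> ('b \<Rightarrow> 'a) \<Rightarrow> bool" where
  "frobenius_ext A B \<iota> \<longleftrightarrow> ring_ext A B \<iota> \<and> fg_projective A B \<iota> \<and>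
    (\<exists>\<theta>. bij_betw \<theta> (carrier A) (HomAB A B \<iota>)
      \<and> (\<forall>a\<in>carrier A. \<forall>a'\<in>carrier A.
           \<theta> (a \<oplus>\<^bsub>A\<^esub> a') = (\<lambda>x\<in>carrier A. \<theta> a x \<oplus>\<^bsub>B\<^esub> \<theta> a' x))
      \<and> (\<forall>b\<in>carrier B. \<forall>a\<in>carrier A.
           \<theta> (\<iota> b \<otimes>\<^bsub>A\<^esub> a) = (\<lambda>x\<in>carrier A. b \<otimes>\<^bsub>B\<^esub> \<theta> a x))
      \<and> (\<forall>a\<in>carrier A. \<forall>a'\<in>carrier A.
           \<theta> (a \<otimes>\<^bsub>A\<^esub> a') = (\<lambda>x\<in>carrier A. \<theta> a (a' \<otimes>\<^bsub>A\<^esub> x))))"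

definition End_ring :: "'a ring \<Rightarrow> 'b ring \<Rightarrow> ('b \<Rightarrow> 'a) \<Rightarrow> ('a \<Rightarrow> 'a) ring" where
  "End_ring A B \<iota> =
    \<lparr>carrier = {f \<in> carrier A \<rightarrow>\<^sub>E carrier A.
                 rhom (carrier A) (add A) (actA A \<iota>) (carrier A) (add A) (actA A \<iota>) (carrier B) f},
     mult = (\<lambda>f g. compose (carrier A) f g),
     one = (\<lambda>x\<in>carrier A. x),
     zero = (\<lambda>x\<in>carrier A. \<zero>\<^bsub>A\<^esub>),
     add = (\<lambda>f g. \<lambda>x\<in>carrier A. f x \<oplus>\<^bsub>A\<^esub> g x)\<rparr>"

definition lmult :: "'a ring \<Rightarrow> 'a \<Rightarrow> ('a \<Rightarrow> 'a)" where
  "lmult A a = (\<lambda>x\<in>carrier A. a \<otimes>\<^bsub>A\<^esub> x)"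

end

theory Submission
  imports Defs "HOL-Library.Function_Algebras"
begin

text \<open>
  Let \<open>Ef = \<theta> 1\<close> be the Frobenius homomorphism and \<open>(x\<^sub>j, y\<^sub>j)\<close> dual bases, so that
  \<open>a = \<Sum>\<^sub>j x\<^sub>j Ef(y\<^sub>j a)\<close>. Then \<open>a \<otimes> a' \<mapsto> dyad a a' = a Ef(a' -)\<close> is an isomorphism
  \<open>A \<otimes>\<^sub>B A \<cong> E\<close> with inverse \<open>End_to_tens f = \<Sum>\<^sub>j f(x\<^sub>j) \<otimes> y\<^sub>j\<close>, and \<open>Ef_rep : E \<rightarrow> A\<close>,
  defined by \<open>Ef(Ef_rep f -) = Ef \<circ> f\<close>, is a \<open>B\<close>-\<open>A\<close>-linear left inverse of \<open>lm = \<lambda>\<close>.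

  Hence \<open>A \<otimes>\<^sub>B A\<close> is a \<open>B\<close>-\<open>A\<close>-bimodule retract of \<open>E \<otimes>\<^sub>A E\<close> via
  \<open>a \<otimes> a' \<mapsto> 1 \<otimes> dyad a a'\<close> and \<open>e \<otimes> e' \<mapsto> End_to_tens (\<lambda>(Ef_rep e) e')\<close>, and an
  \<open>A\<close>-\<open>B\<close>-bimodule retract via \<open>a \<otimes> a' \<mapsto> dyad a a' \<otimes> 1\<close> and
  \<open>e \<otimes> e' \<mapsto> End_to_tens (e \<lambda>(e'(1)))\<close>. Composing a splitting of \<open>E \<otimes>\<^sub>A E\<close> off \<open>E\<^sup>n\<close> with
  these maps, and with \<open>Ef_rep\<close> (respectively evaluation at \<open>1\<close>) and \<open>\<lambda>\<close> on coordinates, splits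
  \<open>A \<otimes>\<^sub>B A\<close> off \<open>A\<^sup>n\<close>. So right D2 for \<open>E | A\<close> gives left D2 for \<open>A | B\<close>, and left D2
  gives right D2.
\<close>

section \<open>Formal sums in \<open>C \<otimes>\<^sub>D C\<close>\<close>

definition tscale :: "int \<Rightarrow> (int \<times> 'c \<times> 'c) list \<Rightarrow> (int \<times> 'c \<times> 'c) list" where
  "tscale k L = map (\<lambda>(k',x,y). (k * k', x, y)) L"

definition tmap :: "('c \<Rightarrow> 'c \<Rightarrow> (int \<times> 'e \<times> 'e) list) \<Rightarrow> (int \<times> 'c \<times> 'c) list \<Rightarrow> (int \<times> 'e \<times> 'e) list" where
  "tmap \<phi> L = concat (map (\<lambda>(k,x,y). tscale k (\<phi> x y)) L)"

lemma tfsum_Nil [simp]: "tfsum [] = 0"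
  by (simp add: tfsum_def fun_eq_iff)

lemma tfsum_Cons: "tfsum ((k,x,y) # L) = (\<lambda>p. if (x,y) = p then k else 0) + tfsum L"
  by (simp add: tfsum_def fun_eq_iff)

lemma tfsum_append [simp]: "tfsum (L @ L') = tfsum L + tfsum L'"
  by (simp add: tfsum_def fun_eq_iff)

lemma tfsum_tscale: "tfsum (tscale k L) = (\<lambda>p. k * tfsum L p)"
  by (induction L) (auto simp: tscale_def tfsum_def fun_eq_iff algebra_simps)

lemma tscale_append [simp]: "tscale k (L @ L') = tscale k L @ tscale k L'"
  by (simp add: tscale_def)

lemma tscale_one [simp]: "tscale 1 L = L"
  by (induction L) (auto simp: tscale_def)

lemma tmap_Nil [simp]: "tmap \<phi> [] = []"
  by (simp add: tmap_def)

lemma tmap_Cons [simp]: "tmap \<phi> ((k,x,y) # L) = tscale k (\<phi> x y) @ tmap \<phi> L"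
  by (simp add: tmap_def)

lemma tmap_append [simp]: "tmap \<phi> (L @ L') = tmap \<phi> L @ tmap \<phi> L'"
  by (simp add: tmap_def)

lemma tmap_concat: "tmap \<phi> (concat Ls) = concat (map (tmap \<phi>) Ls)"
  by (induction Ls) auto

lemma tfsum_concat_map_append:
  "tfsum (concat (map (\<lambda>i. P i @ Q i) is)) = tfsum (concat (map P is)) + tfsum (concat (map Q is))"
  by (induction "is") (simp_all add: algebra_simps)

lemma tmap_tscale: "tmap \<psi> (tscale k L) = tscale k (tmap \<psi> L)"
  by (induction L) (auto simp: tscale_def tmap_def mult.assoc)

lemma tmap_tmap: "tmap \<psi> (tmap \<phi> L) = tmap (\<lambda>x y. tmap \<psi> (\<phi> x y)) L"
  by (induction L) (auto simp: tmap_tscale)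

lemma tmap_cong:
  "(\<And>k x y. (k,x,y) \<in> set L \<Longrightarrow> \<phi> x y = \<psi> x y) \<Longrightarrow> tmap \<phi> L = tmap \<psi> L"
  unfolding tmap_def by (auto intro!: arg_cong[where f = concat])

definition tsupp :: "('c \<times> 'c \<Rightarrow> int) \<Rightarrow> ('c \<times> 'c) set" where
  "tsupp f = {p. f p \<noteq> 0}"

lemma tsupp_tfsum: "tsupp (tfsum L) \<subseteq> snd ` set L"
proof (induction L)
  case Nil
  then show ?case by (simp add: tsupp_def)
next
  case (Cons a L)
  then show ?case
    by (cases a) (auto simp: tsupp_def tfsum_Cons image_iff split: if_splits)
qed

lemma finite_tsupp_tfsum: "finite (tsupp (tfsum L))"
  using tsupp_tfsum finite_subset by blast

lemma tens_null_add: "f \<in> tens_null C D \<iota> \<Longrightarrow> g \<in> tens_null C D \<iota> \<Longrightarrow> f + g \<in> tens_null C D \<iota>"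
  using tens_null.plus[of f C D \<iota> g] by (simp add: plus_fun_def)

lemma tens_null_uminus: "f \<in> tens_null C D \<iota> \<Longrightarrow> - f \<in> tens_null C D \<iota>"
  using tens_null.neg[of f C D \<iota>] by (simp add: fun_Compl_def)

lemma tens_null_zero: "0 \<in> tens_null C D \<iota>"
  using tens_null.zero[of C D \<iota>] by (simp add: zero_fun_def)

lemma tens_null_of_nat_mult: "f \<in> tens_null C D \<iota> \<Longrightarrow> (\<lambda>p. int n * f p) \<in> tens_null C D \<iota>"
proof (induction n)
  case 0
  then show ?case using tens_null_zero by (simp add: zero_fun_def)
next
  case (Suc n)
  have "(\<lambda>p. int (Suc n) * f p) = (\<lambda>p. int n * f p) + f"
    by (simp add: fun_eq_iff algebra_simps)
  then show ?case using Suc tens_null_add by metis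
qed

lemma tens_null_mult: "f \<in> tens_null C D \<iota> \<Longrightarrow> (\<lambda>p. k * f p) \<in> tens_null C D \<iota>"
proof (cases "k \<ge> 0")
  case True
  then show "f \<in> tens_null C D \<iota> \<Longrightarrow> ?thesis"
    using tens_null_of_nat_mult[of f C D \<iota> "nat k"] by simp
next
  case False
  then have "(\<lambda>p. k * f p) = - (\<lambda>p. int (nat (-k)) * f p)"
    by (simp add: fun_eq_iff)
  then show "f \<in> tens_null C D \<iota> \<Longrightarrow> ?thesis"
    using tens_null_uminus tens_null_of_nat_mult by metis
qed

lemma tens_eq_refl: "tens_eq C D \<iota> L L"
  by (simp add: tens_eq_def tens_null_zero)

lemma tens_eq_if_tfsum_eq: "tfsum L = tfsum L' \<Longrightarrow> tens_eq C D \<iota> L L'"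
  by (simp add: tens_eq_def tens_null_zero)

lemma tens_eq_sym: "tens_eq C D \<iota> L L' \<Longrightarrow> tens_eq C D \<iota> L' L"
  unfolding tens_eq_def using tens_null_uminus by (metis minus_diff_eq)

lemma tens_eq_trans [trans]:
  "tens_eq C D \<iota> L L' \<Longrightarrow> tens_eq C D \<iota> L' L'' \<Longrightarrow> tens_eq C D \<iota> L L''"
  unfolding tens_eq_def using tens_null_add by fastforce

lemma tens_eq_append:
  "tens_eq C D \<iota> L1 L1' \<Longrightarrow> tens_eq C D \<iota> L2 L2' \<Longrightarrow> tens_eq C D \<iota> (L1 @ L2) (L1' @ L2')"
  unfolding tens_eq_def using tens_null_add by (fastforce simp: algebra_simps)

lemma tens_eq_append_commute: "tens_eq C D \<iota> (L @ L') (L' @ L)"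
  by (rule tens_eq_if_tfsum_eq) (simp add: add.commute)

lemma tens_eq_tscale: "tens_eq C D \<iota> L L' \<Longrightarrow> tens_eq C D \<iota> (tscale k L) (tscale k L')"
  unfolding tens_eq_def tfsum_tscale
  using tens_null_mult[of "tfsum L - tfsum L'" C D \<iota> k] by (simp add: algebra_simps fun_diff_def)

lemma tens_eq_concat:
  "(\<And>i. i \<in> set is \<Longrightarrow> tens_eq C D \<iota> (P i) (Q i)) \<Longrightarrow>
   tens_eq C D \<iota> (concat (map P is)) (concat (map Q is))"
  by (induction "is") (auto intro: tens_eq_append tens_eq_refl)

lemma tens_eq_Nil_if_double: "tens_eq C D \<iota> L (L @ L) \<Longrightarrow> tens_eq C D \<iota> L []"
  unfolding tens_eq_def using tens_null_uminus by fastforce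

lemma tens_eq_tmap_cong:
  "(\<And>k x y. (k,x,y) \<in> set L \<Longrightarrow> tens_eq C D \<iota> (\<phi> x y) (\<psi> x y)) \<Longrightarrow>
   tens_eq C D \<iota> (tmap \<phi> L) (tmap \<psi> L)"
proof (induction L)
  case Nil
  then show ?case by (simp add: tens_eq_refl)
next
  case (Cons a L)
  then show ?case by (cases a) (auto intro!: tens_eq_append tens_eq_tscale)
qed

lemma tens_eq_tmap_ident:
  "(\<And>k x y. (k,x,y) \<in> set L \<Longrightarrow> tens_eq C D \<iota> (\<phi> x y) [(1,x,y)]) \<Longrightarrow>
   tens_eq C D \<iota> (tmap \<phi> L) L"
proof (induction L)
  case Nil
  then show ?case by (simp add: tens_eq_refl)
next
  case (Cons a L)
  obtain k x y where a: "a = (k,x,y)" by (cases a)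
  have "tens_eq C D \<iota> (tscale k (\<phi> x y) @ tmap \<phi> L) (tscale k [(1,x,y)] @ L)"
    using Cons a by (auto intro!: tens_eq_append tens_eq_tscale)
  then show ?case by (simp add: a tscale_def)
qed

lemma tens_eq_add_left:
  assumes "x \<in> carrier C" "y \<in> carrier C" "z \<in> carrier C"
  shows "tens_eq C D \<iota> [(1, x \<oplus>\<^bsub>C\<^esub> y, z)] [(1, x, z), (1, y, z)]"
proof -
  have "tfsum [(1, x \<oplus>\<^bsub>C\<^esub> y, z)] - tfsum [(1, x, z), (1, y, z)]
      = tfsum [(1, x \<oplus>\<^bsub>C\<^esub> y, z), (-1, x, z), (-1, y, z)]"
    by (simp add: tfsum_def fun_eq_iff)
  then show ?thesis using tens_null.addl[of x C y z D \<iota>] assms by (simp add: tens_eq_def)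
qed

lemma tens_eq_add_right:
  assumes "x \<in> carrier C" "y \<in> carrier C" "z \<in> carrier C"
  shows "tens_eq C D \<iota> [(1, x, y \<oplus>\<^bsub>C\<^esub> z)] [(1, x, y), (1, x, z)]"
proof -
  have "tfsum [(1, x, y \<oplus>\<^bsub>C\<^esub> z)] - tfsum [(1, x, y), (1, x, z)]
      = tfsum [(1, x, y \<oplus>\<^bsub>C\<^esub> z), (-1, x, y), (-1, x, z)]"
    by (simp add: tfsum_def fun_eq_iff)
  then show ?thesis using tens_null.addr[of x C y z D \<iota>] assms by (simp add: tens_eq_def)
qed

lemma tens_eq_balance:
  assumes "x \<in> carrier C" "z \<in> carrier C" "d \<in> carrier D"
  shows "tens_eq C D \<iota> [(1, x \<otimes>\<^bsub>C\<^esub> \<iota> d, z)] [(1, x, \<iota> d \<otimes>\<^bsub>C\<^esub> z)]"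
proof -
  have "tfsum [(1, x \<otimes>\<^bsub>C\<^esub> \<iota> d, z)] - tfsum [(1, x, \<iota> d \<otimes>\<^bsub>C\<^esub> z)]
      = tfsum [(1, x \<otimes>\<^bsub>C\<^esub> \<iota> d, z), (-1, x, \<iota> d \<otimes>\<^bsub>C\<^esub> z)]"
    by (simp add: tfsum_def fun_eq_iff)
  then show ?thesis using tens_null.bal[of x C z d D \<iota>] assms by (simp add: tens_eq_def)
qed

lemma (in ring) tens_eq_finsum_right:
  assumes x: "x \<in> carrier R" and g: "g \<in> {..<k} \<rightarrow> carrier R"
  shows "tens_eq R D \<iota> [(1, x, finsum R g {..<k})] (concat (map (\<lambda>j. [(1, x, g j)]) [0..<k]))"
  using g
proof (induction k)
  case 0
  have "tens_eq R D \<iota> [(1, x, \<zero>)] ([(1, x, \<zero>)] @ [(1, x, \<zero>)])"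
    using tens_eq_add_right[of x R \<zero> \<zero> D \<iota>] x by simp
  then show ?case using tens_eq_Nil_if_double by fastforce
next
  case (Suc k)
  then have g: "g \<in> {..<k} \<rightarrow> carrier R" and gk: "g k \<in> carrier R" by auto
  have "tens_eq R D \<iota> [(1, x, finsum R g {..<Suc k})] ([(1, x, g k)] @ [(1, x, finsum R g {..<k})])"
    using tens_eq_add_right[OF x gk finsum_closed[OF g]] Suc.prems
    by (simp add: lessThan_Suc Pi_def)
  also have "tens_eq R D \<iota> \<dots> ([(1, x, g k)] @ concat (map (\<lambda>j. [(1, x, g j)]) [0..<k]))"
    by (rule tens_eq_append[OF tens_eq_refl Suc.IH[OF g]])
  also have "tens_eq R D \<iota> \<dots> (concat (map (\<lambda>j. [(1, x, g j)]) [0..<k]) @ [(1, x, g k)])"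
    by (rule tens_eq_append_commute)
  finally show ?case by simp
qed

text \<open>The relations \<open>tens_null\<close> are coefficient functions rather than formal sums, so \<open>tmap \<phi>\<close>
  is extended to finitely supported coefficient functions.\<close>

definition tmap_coeffs :: "('c \<Rightarrow> 'c \<Rightarrow> (int \<times> 'e \<times> 'e) list) \<Rightarrow> ('c \<times> 'c \<Rightarrow> int) \<Rightarrow> ('e \<times> 'e \<Rightarrow> int)" where
  "tmap_coeffs \<phi> f = (\<lambda>q. \<Sum>p\<in>tsupp f. f p * tfsum (\<phi> (fst p) (snd p)) q)"

lemma tmap_coeffs_superset:
  assumes "finite S" "tsupp f \<subseteq> S"
  shows "tmap_coeffs \<phi> f = (\<lambda>q. \<Sum>p\<in>S. f p * tfsum (\<phi> (fst p) (snd p)) q)"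
  unfolding tmap_coeffs_def fun_eq_iff
  by (intro allI sum.mono_neutral_left assms) (auto simp: tsupp_def)

lemma tfsum_tmap_eq_sum:
  assumes "finite S" "snd ` set L \<subseteq> S"
  shows "tfsum (tmap \<phi> L) q = (\<Sum>p\<in>S. tfsum L p * tfsum (\<phi> (fst p) (snd p)) q)"
  using assms(2)
proof (induction L)
  case Nil
  then show ?case by simp
next
  case (Cons a L)
  obtain k x y where a: "a = (k,x,y)" by (cases a)
  with Cons.prems have xy: "(x,y) \<in> S" and L: "snd ` set L \<subseteq> S" by auto
  have "(\<Sum>p\<in>S. (if (x,y) = p then k else 0) * tfsum (\<phi> (fst p) (snd p)) q)
      = (\<Sum>p\<in>S. if (x,y) = p then k * tfsum (\<phi> (fst p) (snd p)) q else 0)"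
    by (rule sum.cong) auto
  also have "\<dots> = k * tfsum (\<phi> x y) q"
    using xy assms(1) by (simp add: sum.delta')
  finally show ?case
    using Cons.IH[OF L] by (simp add: a tfsum_tscale tfsum_Cons sum.distrib algebra_simps)
qed

lemma tmap_coeffs_tfsum: "tmap_coeffs \<phi> (tfsum L) = tfsum (tmap \<phi> L)"
proof
  fix q
  show "tmap_coeffs \<phi> (tfsum L) q = tfsum (tmap \<phi> L) q"
    using tmap_coeffs_superset[OF _ tsupp_tfsum, where L1 = L and \<phi> = \<phi>]
      tfsum_tmap_eq_sum[OF _ order_refl, where L = L and \<phi> = \<phi> and q = q] by simp
qed

lemma tmap_coeffs_add:
  assumes "finite (tsupp f)" "finite (tsupp g)"
  shows "tmap_coeffs \<phi> (f + g) = tmap_coeffs \<phi> f + tmap_coeffs \<phi> g"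
proof -
  have "tsupp (f + g) \<subseteq> tsupp f \<union> tsupp g"
    by (auto simp: tsupp_def)
  then show ?thesis
    using assms by (simp add: tmap_coeffs_superset[of "tsupp f \<union> tsupp g"] fun_eq_iff
        sum.distrib algebra_simps)
qed

lemma tsupp_uminus [simp]: "tsupp (- f) = tsupp f"
  by (simp add: tsupp_def)

lemma tmap_coeffs_uminus: "tmap_coeffs \<phi> (- f) = - tmap_coeffs \<phi> f"
  by (simp add: tmap_coeffs_def tsupp_def fun_eq_iff sum_negf)

definition tens_balanced :: "('c,'m) ring_scheme \<Rightarrow> ('d,'n) ring_scheme \<Rightarrow> ('d \<Rightarrow> 'c)
    \<Rightarrow> ('e,'o) ring_scheme \<Rightarrow> ('f,'p) ring_scheme \<Rightarrow> ('f \<Rightarrow> 'e)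
    \<Rightarrow> ('c \<Rightarrow> 'c \<Rightarrow> (int \<times> 'e \<times> 'e) list) \<Rightarrow> bool" where
  "tens_balanced C D \<iota> C' D' \<iota>' \<phi> \<longleftrightarrow>
     (\<forall>x\<in>carrier C. \<forall>y\<in>carrier C. \<forall>z\<in>carrier C.
        tens_eq C' D' \<iota>' (\<phi> (x \<oplus>\<^bsub>C\<^esub> y) z) (\<phi> x z @ \<phi> y z)
      \<and> tens_eq C' D' \<iota>' (\<phi> x (y \<oplus>\<^bsub>C\<^esub> z)) (\<phi> x y @ \<phi> x z))
   \<and> (\<forall>x\<in>carrier C. \<forall>z\<in>carrier C. \<forall>d\<in>carrier D.
        tens_eq C' D' \<iota>' (\<phi> (x \<otimes>\<^bsub>C\<^esub> \<iota> d) z) (\<phi> x (\<iota> d \<otimes>\<^bsub>C\<^esub> z)))"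

lemma tmap_coeffs_tens_null:
  assumes "g \<in> tens_null C D \<iota>" and \<phi>: "tens_balanced C D \<iota> C' D' \<iota>' \<phi>"
  shows "finite (tsupp g) \<and> tmap_coeffs \<phi> g \<in> tens_null C' D' \<iota>'"
  using assms(1)
proof (induction rule: tens_null.induct)
  have relation: "finite (tsupp (tfsum L)) \<and> tmap_coeffs \<phi> (tfsum L) \<in> tens_null C' D' \<iota>'"
    if "tfsum (tmap \<phi> L) = tfsum P - tfsum Q" "tens_eq C' D' \<iota>' P Q" for L P Q
    using that finite_tsupp_tfsum by (simp add: tmap_coeffs_tfsum tens_eq_def)
  {
    case zero
    show ?case
      using tens_null_zero by (simp add: tsupp_def tmap_coeffs_def zero_fun_def[symmetric])
  next
    case (addl x y z)
    show ?case
      by (rule relation[where P = "\<phi> (x \<oplus>\<^bsub>C\<^esub> y) z" and Q = "\<phi> x z @ \<phi> y z"])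
        (use addl \<phi> in \<open>auto simp: tens_balanced_def tfsum_tscale fun_eq_iff\<close>)
  next
    case (addr x y z)
    show ?case
      by (rule relation[where P = "\<phi> x (y \<oplus>\<^bsub>C\<^esub> z)" and Q = "\<phi> x y @ \<phi> x z"])
        (use addr \<phi> in \<open>auto simp: tens_balanced_def tfsum_tscale fun_eq_iff\<close>)
  next
    case (bal x z d)
    show ?case
      by (rule relation[where P = "\<phi> (x \<otimes>\<^bsub>C\<^esub> \<iota> d) z" and Q = "\<phi> x (\<iota> d \<otimes>\<^bsub>C\<^esub> z)"])
        (use bal \<phi> in \<open>auto simp: tens_balanced_def tfsum_tscale fun_eq_iff\<close>)
  next
    case (plus f g)
    have "tsupp (\<lambda>p. f p + g p) \<subseteq> tsupp f \<union> tsupp g"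
      by (auto simp: tsupp_def)
    with plus show ?case
      using tmap_coeffs_add[of f g \<phi>] tens_null_add
      by (auto simp: plus_fun_def intro: finite_subset)
  next
    case (neg f)
    have "(\<lambda>p. - f p) = - f"
      by (simp add: fun_eq_iff)
    with neg show ?case
      using tmap_coeffs_uminus[of \<phi> f] tens_null.neg[of "tmap_coeffs \<phi> f" C' D' \<iota>'] by simp
  }
qed

lemma tens_eq_tmap:
  assumes "tens_eq C D \<iota> L L'" and "tens_balanced C D \<iota> C' D' \<iota>' \<phi>"
  shows "tens_eq C' D' \<iota>' (tmap \<phi> L) (tmap \<phi> L')"
proof -
  have "tmap_coeffs \<phi> (tfsum L - tfsum L') \<in> tens_null C' D' \<iota>'"
    using tmap_coeffs_tens_null[OF _ assms(2)] assms(1) unfolding tens_eq_def by blast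
  moreover have "tmap_coeffs \<phi> (tfsum L - tfsum L') = tfsum (tmap \<phi> L) - tfsum (tmap \<phi> L')"
    using tmap_coeffs_add[of "tfsum L" "- tfsum L'" \<phi>] tmap_coeffs_uminus[of \<phi> "tfsum L'"]
    by (simp add: tmap_coeffs_tfsum finite_tsupp_tfsum)
  ultimately show ?thesis
    by (simp add: tens_eq_def)
qed

lemma tlact_Nil [simp]: "tlact C c [] = []"
  by (simp add: tlact_def)

lemma tract_Nil [simp]: "tract C c [] = []"
  by (simp add: tract_def)

lemma tlact_Cons [simp]: "tlact C c ((k,x,y) # L) = (k, c \<otimes>\<^bsub>C\<^esub> x, y) # tlact C c L"
  by (simp add: tlact_def)

lemma tract_Cons [simp]: "tract C c ((k,x,y) # L) = (k, x, y \<otimes>\<^bsub>C\<^esub> c) # tract C c L"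
  by (simp add: tract_def)

lemma tlact_append [simp]: "tlact C c (L @ L') = tlact C c L @ tlact C c L'"
  by (simp add: tlact_def)

lemma tract_append [simp]: "tract C c (L @ L') = tract C c L @ tract C c L'"
  by (simp add: tract_def)

lemma tlact_tscale: "tlact C c (tscale k L) = tscale k (tlact C c L)"
  by (induction L) (auto simp: tscale_def)

lemma tract_tscale: "tract C c (tscale k L) = tscale k (tract C c L)"
  by (induction L) (auto simp: tscale_def)

lemma tmap_tlact: "tmap \<phi> (tlact C c L) = tmap (\<lambda>x y. \<phi> (c \<otimes>\<^bsub>C\<^esub> x) y) L"
  by (induction L) auto

lemma tmap_tract: "tmap \<phi> (tract C c L) = tmap (\<lambda>x y. \<phi> x (y \<otimes>\<^bsub>C\<^esub> c)) L"
  by (induction L) auto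

lemma tlact_tmap: "tlact C c (tmap \<phi> L) = tmap (\<lambda>x y. tlact C c (\<phi> x y)) L"
  by (induction L) (auto simp: tlact_tscale)

lemma tract_tmap: "tract C c (tmap \<phi> L) = tmap (\<lambda>x y. tract C c (\<phi> x y)) L"
  by (induction L) (auto simp: tract_tscale)

lemma tfreeD: "(k,x,y) \<in> set L \<Longrightarrow> L \<in> tfree C \<Longrightarrow> x \<in> carrier C \<and> y \<in> carrier C"
  by (auto simp: tfree_def)

lemma tfree_append: "L \<in> tfree C \<Longrightarrow> L' \<in> tfree C \<Longrightarrow> L @ L' \<in> tfree C"
  by (auto simp: tfree_def)

lemma tfree_tscale: "L \<in> tfree C \<Longrightarrow> tscale k L \<in> tfree C"
  by (auto simp: tscale_def tfree_def)

lemma tfree_tmap: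
  assumes "\<And>x y. x \<in> carrier C \<Longrightarrow> y \<in> carrier C \<Longrightarrow> \<phi> x y \<in> tfree C'" and "L \<in> tfree C"
  shows "tmap \<phi> L \<in> tfree C'"
  using assms(2)
proof (induction L)
  case Nil
  then show ?case by (simp add: tfree_def)
next
  case (Cons a L)
  obtain k x y where a: "a = (k,x,y)" by (cases a)
  with Cons.prems have "x \<in> carrier C" "y \<in> carrier C" "L \<in> tfree C"
    by (auto simp: tfree_def)
  with Cons.IH show ?case
    using assms(1) by (simp add: a tfree_append tfree_tscale)
qed

lemma (in ring) tfree_tlact: "c \<in> carrier R \<Longrightarrow> L \<in> tfree R \<Longrightarrow> tlact R c L \<in> tfree R"
  by (auto simp: tlact_def tfree_def)

lemma (in ring) tfree_tract: "c \<in> carrier R \<Longrightarrow> L \<in> tfree R \<Longrightarrow> tract R c L \<in> tfree R"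
  by (auto simp: tract_def tfree_def)

section \<open>Direct summands of \<open>C\<^sup>n\<close>\<close>

definition vsingle :: "('c,'m) ring_scheme \<Rightarrow> nat \<Rightarrow> nat \<Rightarrow> 'c \<Rightarrow> (nat \<Rightarrow> 'c)" where
  "vsingle C n i c = (\<lambda>j\<in>{..<n}. if j = i then c else \<zero>\<^bsub>C\<^esub>)"

definition vtrunc :: "('c,'m) ring_scheme \<Rightarrow> nat \<Rightarrow> (nat \<Rightarrow> 'c) \<Rightarrow> nat \<Rightarrow> (nat \<Rightarrow> 'c)" where
  "vtrunc C n u k = (\<lambda>j\<in>{..<n}. if j < k then u j else \<zero>\<^bsub>C\<^esub>)"

context ring
begin

lemma vsingle_closed: "c \<in> carrier R \<Longrightarrow> vsingle R n i c \<in> {..<n} \<rightarrow>\<^sub>E carrier R"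
  by (auto simp: vsingle_def)

lemma vsingle_eq_vlmul: "c \<in> carrier R \<Longrightarrow> vsingle R n i c = vlmul R n c (vsingle R n i \<one>)"
  by (auto simp: vsingle_def vlmul_def)

lemma vsingle_eq_vrmul: "c \<in> carrier R \<Longrightarrow> vsingle R n i c = vrmul R n (vsingle R n i \<one>) c"
  by (auto simp: vsingle_def vrmul_def)

lemma vtrunc_closed: "u \<in> {..<n} \<rightarrow>\<^sub>E carrier R \<Longrightarrow> vtrunc R n u k \<in> {..<n} \<rightarrow>\<^sub>E carrier R"
  unfolding vtrunc_def by (intro PiE_I) auto

lemma vtrunc_0: "vtrunc R n u 0 = vadd R n (vtrunc R n u 0) (vtrunc R n u 0)"
  by (auto simp: vtrunc_def vadd_def)

lemma vtrunc_Suc: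
  assumes u: "u \<in> {..<n} \<rightarrow>\<^sub>E carrier R"
  shows "vtrunc R n u (Suc k) = vadd R n (vtrunc R n u k) (vsingle R n k (u k))"
proof
  fix j
  show "vtrunc R n u (Suc k) j = vadd R n (vtrunc R n u k) (vsingle R n k (u k)) j"
  proof (cases "j < n")
    case True
    with u have "u j \<in> carrier R"
      by blast
    with True show ?thesis
      by (auto simp: vtrunc_def vadd_def vsingle_def less_Suc_eq)
  qed (simp add: vtrunc_def vadd_def)
qed

lemma vtrunc_self:
  assumes "u \<in> {..<n} \<rightarrow>\<^sub>E carrier R"
  shows "vtrunc R n u n = u"
proof
  fix j
  show "vtrunc R n u n j = u j"
    using PiE_arb[OF assms, of j] by (simp add: vtrunc_def)
qed

end

locale tensor_retract =
  fixes C :: "('c,'m) ring_scheme" and D :: "('d,'n) ring_scheme" and \<iota> :: "'d \<Rightarrow> 'c"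
    and S R :: "'c set" and n :: nat
    and F :: "(int \<times> 'c \<times> 'c) list \<Rightarrow> nat \<Rightarrow> 'c"
    and G :: "(nat \<Rightarrow> 'c) \<Rightarrow> (int \<times> 'c \<times> 'c) list"
  assumes F_closed: "L \<in> tfree C \<Longrightarrow> F L \<in> {..<n} \<rightarrow>\<^sub>E carrier C"
    and F_tens_eq: "L \<in> tfree C \<Longrightarrow> L' \<in> tfree C \<Longrightarrow> tens_eq C D \<iota> L L' \<Longrightarrow> F L = F L'"
    and F_append: "L \<in> tfree C \<Longrightarrow> L' \<in> tfree C \<Longrightarrow> F (L @ L') = vadd C n (F L) (F L')"
    and F_tlact: "s \<in> S \<Longrightarrow> L \<in> tfree C \<Longrightarrow> F (tlact C s L) = vlmul C n s (F L)"
    and F_tract: "r \<in> R \<Longrightarrow> L \<in> tfree C \<Longrightarrow> F (tract C r L) = vrmul C n (F L) r"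
    and G_tfree: "v \<in> {..<n} \<rightarrow>\<^sub>E carrier C \<Longrightarrow> G v \<in> tfree C"
    and G_vadd: "v \<in> {..<n} \<rightarrow>\<^sub>E carrier C \<Longrightarrow> w \<in> {..<n} \<rightarrow>\<^sub>E carrier C \<Longrightarrow>
      tens_eq C D \<iota> (G (vadd C n v w)) (G v @ G w)"
    and G_vlmul: "s \<in> S \<Longrightarrow> v \<in> {..<n} \<rightarrow>\<^sub>E carrier C \<Longrightarrow>
      tens_eq C D \<iota> (G (vlmul C n s v)) (tlact C s (G v))"
    and G_vrmul: "r \<in> R \<Longrightarrow> v \<in> {..<n} \<rightarrow>\<^sub>E carrier C \<Longrightarrow>
      tens_eq C D \<iota> (G (vrmul C n v r)) (tract C r (G v))"
    and G_F: "L \<in> tfree C \<Longrightarrow> tens_eq C D \<iota> (G (F L)) L"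

lemma tensor_retract_if_summand:
  "tensor_summand C D \<iota> S R n F G \<Longrightarrow> tensor_retract C D \<iota> S R n F G"
  by unfold_locales (simp_all add: tensor_summand_def)

lemma tensor_summand_if_retract:
  assumes "tensor_retract C D \<iota> S R n F G"
  shows "tensor_summand C D \<iota> S R n F G"
proof -
  interpret tensor_retract C D \<iota> S R n F G by fact
  show ?thesis
    unfolding tensor_summand_def
    by (intro conjI ballI impI;
        rule F_closed F_tens_eq F_append F_tlact F_tract G_tfree G_vadd G_vlmul G_vrmul G_F;
        assumption)
qed

context tensor_retract
begin

lemma G_decomp_vsingle:
  assumes "ring C" and u: "u \<in> {..<n} \<rightarrow>\<^sub>E carrier C"
  shows "tens_eq C D \<iota> (G u) (concat (map (\<lambda>i. G (vsingle C n i (u i))) [0..<n]))"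
proof -
  interpret ring C by fact
  have "tens_eq C D \<iota> (G (vtrunc C n u k)) (concat (map (\<lambda>i. G (vsingle C n i (u i))) [0..<k]))"
    if "k \<le> n" for k
    using that
  proof (induction k)
    case 0
    have "vadd C n (vtrunc C n u 0) (vtrunc C n u 0) = vtrunc C n u 0"
      by (rule vtrunc_0[symmetric])
    then have "tens_eq C D \<iota> (G (vtrunc C n u 0)) (G (vtrunc C n u 0) @ G (vtrunc C n u 0))"
      using G_vadd[OF vtrunc_closed[OF u, of 0] vtrunc_closed[OF u, of 0]] by simp
    from tens_eq_Nil_if_double[OF this] show ?case
      by simp
  next
    case (Suc k)
    then have uk: "u k \<in> carrier C"
      using PiE_mem[OF u] by simp
    have "tens_eq C D \<iota> (G (vtrunc C n u (Suc k)))
        (G (vtrunc C n u k) @ G (vsingle C n k (u k)))"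
      unfolding vtrunc_Suc[OF u] by (rule G_vadd[OF vtrunc_closed[OF u] vsingle_closed[OF uk]])
    also have "tens_eq C D \<iota> \<dots>
        (concat (map (\<lambda>i. G (vsingle C n i (u i))) [0..<k]) @ G (vsingle C n k (u k)))"
      using Suc by (intro tens_eq_append tens_eq_refl) simp
    finally show ?case
      by simp
  qed
  from this[of n] show ?thesis
    using vtrunc_self[OF u] by simp
qed

lemma G_decomp_tlact:
  assumes "ring C" and u: "u \<in> {..<n} \<rightarrow>\<^sub>E carrier C" "u ` {..<n} \<subseteq> S"
  shows "tens_eq C D \<iota> (G u) (concat (map (\<lambda>i. tlact C (u i) (G (vsingle C n i \<one>\<^bsub>C\<^esub>))) [0..<n]))"
proof -
  interpret ring C by fact
  have "tens_eq C D \<iota> (G (vsingle C n i (u i))) (tlact C (u i) (G (vsingle C n i \<one>\<^bsub>C\<^esub>)))"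
    if "i < n" for i
  proof -
    from that have ui: "u i \<in> carrier C" "u i \<in> S"
      using PiE_mem[OF u(1)] u(2) by auto
    show ?thesis
      unfolding vsingle_eq_vlmul[OF ui(1), of n i] by (rule G_vlmul[OF ui(2) vsingle_closed[OF one_closed]])
  qed
  then have "tens_eq C D \<iota> (concat (map (\<lambda>i. G (vsingle C n i (u i))) [0..<n]))
      (concat (map (\<lambda>i. tlact C (u i) (G (vsingle C n i \<one>\<^bsub>C\<^esub>))) [0..<n]))"
    by (intro tens_eq_concat) simp
  with G_decomp_vsingle[OF \<open>ring C\<close> u(1)] show ?thesis
    by (rule tens_eq_trans)
qed

lemma G_decomp_tract:
  assumes "ring C" and u: "u \<in> {..<n} \<rightarrow>\<^sub>E carrier C" "u ` {..<n} \<subseteq> R"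
  shows "tens_eq C D \<iota> (G u) (concat (map (\<lambda>i. tract C (u i) (G (vsingle C n i \<one>\<^bsub>C\<^esub>))) [0..<n]))"
proof -
  interpret ring C by fact
  have "tens_eq C D \<iota> (G (vsingle C n i (u i))) (tract C (u i) (G (vsingle C n i \<one>\<^bsub>C\<^esub>)))"
    if "i < n" for i
  proof -
    from that have ui: "u i \<in> carrier C" "u i \<in> R"
      using PiE_mem[OF u(1)] u(2) by auto
    show ?thesis
      unfolding vsingle_eq_vrmul[OF ui(1), of n i] by (rule G_vrmul[OF ui(2) vsingle_closed[OF one_closed]])
  qed
  then have "tens_eq C D \<iota> (concat (map (\<lambda>i. G (vsingle C n i (u i))) [0..<n]))
      (concat (map (\<lambda>i. tract C (u i) (G (vsingle C n i \<one>\<^bsub>C\<^esub>))) [0..<n]))"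
    by (intro tens_eq_concat) simp
  with G_decomp_vsingle[OF \<open>ring C\<close> u(1)] show ?thesis
    by (rule tens_eq_trans)
qed

lemma tmap_G_cong_tlact:
  assumes "ring C" and \<psi>: "tens_balanced C D \<iota> C' D' \<iota>' \<psi>"
    and u: "u \<in> {..<n} \<rightarrow>\<^sub>E carrier C" "u ` {..<n} \<subseteq> S"
    and u': "u' \<in> {..<n} \<rightarrow>\<^sub>E carrier C" "u' ` {..<n} \<subseteq> S"
    and eq: "\<And>i x y. i < n \<Longrightarrow> x \<in> carrier C \<Longrightarrow> y \<in> carrier C \<Longrightarrow>
      \<psi> (u i \<otimes>\<^bsub>C\<^esub> x) y = \<psi> (u' i \<otimes>\<^bsub>C\<^esub> x) y"
  shows "tens_eq C' D' \<iota>' (tmap \<psi> (G u)) (tmap \<psi> (G u'))"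
proof -
  interpret ring C by fact
  have "tmap \<psi> (tlact C (u i) (G (vsingle C n i \<one>\<^bsub>C\<^esub>))) = tmap \<psi> (tlact C (u' i) (G (vsingle C n i \<one>\<^bsub>C\<^esub>)))"
    if "i < n" for i
    unfolding tmap_tlact
  proof (rule tmap_cong)
    fix k x y
    assume "(k, x, y) \<in> set (G (vsingle C n i \<one>\<^bsub>C\<^esub>))"
    then have "x \<in> carrier C \<and> y \<in> carrier C"
      by (rule tfreeD) (rule G_tfree[OF vsingle_closed[OF one_closed]])
    with that show "\<psi> (u i \<otimes>\<^bsub>C\<^esub> x) y = \<psi> (u' i \<otimes>\<^bsub>C\<^esub> x) y"
      by (intro eq) auto
  qed
  then have sums_eq: "concat (map (\<lambda>i. tmap \<psi> (tlact C (u i) (G (vsingle C n i \<one>\<^bsub>C\<^esub>)))) [0..<n])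
      = concat (map (\<lambda>i. tmap \<psi> (tlact C (u' i) (G (vsingle C n i \<one>\<^bsub>C\<^esub>)))) [0..<n])"
    by (intro arg_cong[where f = concat] map_cong) auto
  have "tens_eq C' D' \<iota>' (tmap \<psi> (G u))
      (concat (map (\<lambda>i. tmap \<psi> (tlact C (u i) (G (vsingle C n i \<one>\<^bsub>C\<^esub>)))) [0..<n]))"
    using tens_eq_tmap[OF G_decomp_tlact[OF \<open>ring C\<close> u] \<psi>] by (simp add: tmap_concat comp_def)
  moreover have "tens_eq C' D' \<iota>' (tmap \<psi> (G u'))
      (concat (map (\<lambda>i. tmap \<psi> (tlact C (u' i) (G (vsingle C n i \<one>\<^bsub>C\<^esub>)))) [0..<n]))"
    using tens_eq_tmap[OF G_decomp_tlact[OF \<open>ring C\<close> u'] \<psi>] by (simp add: tmap_concat comp_def)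
  ultimately show ?thesis
    unfolding sums_eq by (rule tens_eq_trans[OF _ tens_eq_sym])
qed

lemma tmap_G_cong_tract:
  assumes "ring C" and \<psi>: "tens_balanced C D \<iota> C' D' \<iota>' \<psi>"
    and u: "u \<in> {..<n} \<rightarrow>\<^sub>E carrier C" "u ` {..<n} \<subseteq> R"
    and u': "u' \<in> {..<n} \<rightarrow>\<^sub>E carrier C" "u' ` {..<n} \<subseteq> R"
    and eq: "\<And>i x y. i < n \<Longrightarrow> x \<in> carrier C \<Longrightarrow> y \<in> carrier C \<Longrightarrow>
      \<psi> x (y \<otimes>\<^bsub>C\<^esub> u i) = \<psi> x (y \<otimes>\<^bsub>C\<^esub> u' i)"
  shows "tens_eq C' D' \<iota>' (tmap \<psi> (G u)) (tmap \<psi> (G u'))"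
proof -
  interpret ring C by fact
  have "tmap \<psi> (tract C (u i) (G (vsingle C n i \<one>\<^bsub>C\<^esub>))) = tmap \<psi> (tract C (u' i) (G (vsingle C n i \<one>\<^bsub>C\<^esub>)))"
    if "i < n" for i
    unfolding tmap_tract
  proof (rule tmap_cong)
    fix k x y
    assume "(k, x, y) \<in> set (G (vsingle C n i \<one>\<^bsub>C\<^esub>))"
    then have "x \<in> carrier C \<and> y \<in> carrier C"
      by (rule tfreeD) (rule G_tfree[OF vsingle_closed[OF one_closed]])
    with that show "\<psi> x (y \<otimes>\<^bsub>C\<^esub> u i) = \<psi> x (y \<otimes>\<^bsub>C\<^esub> u' i)"
      by (intro eq) auto
  qed
  then have sums_eq: "concat (map (\<lambda>i. tmap \<psi> (tract C (u i) (G (vsingle C n i \<one>\<^bsub>C\<^esub>)))) [0..<n])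
      = concat (map (\<lambda>i. tmap \<psi> (tract C (u' i) (G (vsingle C n i \<one>\<^bsub>C\<^esub>)))) [0..<n])"
    by (intro arg_cong[where f = concat] map_cong) auto
  have "tens_eq C' D' \<iota>' (tmap \<psi> (G u))
      (concat (map (\<lambda>i. tmap \<psi> (tract C (u i) (G (vsingle C n i \<one>\<^bsub>C\<^esub>)))) [0..<n]))"
    using tens_eq_tmap[OF G_decomp_tract[OF \<open>ring C\<close> u] \<psi>] by (simp add: tmap_concat comp_def)
  moreover have "tens_eq C' D' \<iota>' (tmap \<psi> (G u'))
      (concat (map (\<lambda>i. tmap \<psi> (tract C (u' i) (G (vsingle C n i \<one>\<^bsub>C\<^esub>)))) [0..<n]))"
    using tens_eq_tmap[OF G_decomp_tract[OF \<open>ring C\<close> u'] \<psi>] by (simp add: tmap_concat comp_def)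
  ultimately show ?thesis
    unfolding sums_eq by (rule tens_eq_trans[OF _ tens_eq_sym])
qed

end

section \<open>Frobenius extensions and dual bases\<close>

lemma additive_finsum:
  assumes "abelian_group R" "abelian_group S" "finite I"
    and h_closed: "\<And>x. x \<in> carrier R \<Longrightarrow> h x \<in> carrier S"
    and h_add: "\<And>x y. x \<in> carrier R \<Longrightarrow> y \<in> carrier R \<Longrightarrow> h (x \<oplus>\<^bsub>R\<^esub> y) = h x \<oplus>\<^bsub>S\<^esub> h y"
    and g: "g \<in> I \<rightarrow> carrier R"
  shows "h (finsum R g I) = finsum S (\<lambda>i. h (g i)) I"
  using \<open>finite I\<close> g
proof (induction I rule: finite_induct)
  case empty
  interpret R: abelian_group R by fact
  interpret S: abelian_group S by fact
  have "h \<zero>\<^bsub>R\<^esub> \<oplus>\<^bsub>S\<^esub> h \<zero>\<^bsub>R\<^esub> = h \<zero>\<^bsub>R\<^esub>"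
    using h_add[of "\<zero>\<^bsub>R\<^esub>" "\<zero>\<^bsub>R\<^esub>"] by simp
  then show ?case
    using h_closed[of "\<zero>\<^bsub>R\<^esub>"] S.add.l_cancel_one' by simp
next
  case (insert i I)
  interpret R: abelian_group R by fact
  interpret S: abelian_group S by fact
  from insert.prems have "g i \<in> carrier R" "g \<in> I \<rightarrow> carrier R"
    by auto
  with insert show ?case
    using h_closed by (simp add: R.finsum_insert S.finsum_insert h_add R.finsum_closed Pi_def)
qed

lemma pow_add_eq_vadd: "pow_add n (add R) = vadd R n"
  by (simp add: fun_eq_iff pow_add_def vadd_def)

lemma pow_act_eq_vrmul: "pow_act n (mult R) = vrmul R n"
  by (simp add: fun_eq_iff pow_act_def vrmul_def)

lemma free_module_hom_eq_finsum:
  assumes "ring A" "ring B" and \<iota>: "\<iota> \<in> ring_hom B A"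
    and p: "rhom (pow_carrier (carrier B) m) (pow_add m (add B)) (pow_act m (mult B))
      (carrier A) (add A) (actA A \<iota>) (carrier B) p"
    and v: "v \<in> {..<m} \<rightarrow>\<^sub>E carrier B"
  shows "p v = finsum A (\<lambda>j. p (vsingle B m j \<one>\<^bsub>B\<^esub>) \<otimes>\<^bsub>A\<^esub> \<iota> (v j)) {..<m}"
proof -
  interpret A: ring A by fact
  interpret B: ring B by fact
  have p_closed: "\<And>w. w \<in> {..<m} \<rightarrow>\<^sub>E carrier B \<Longrightarrow> p w \<in> carrier A"
    and p_add: "\<And>w w'. w \<in> {..<m} \<rightarrow>\<^sub>E carrier B \<Longrightarrow> w' \<in> {..<m} \<rightarrow>\<^sub>E carrier B \<Longrightarrow>
      p (vadd B m w w') = p w \<oplus>\<^bsub>A\<^esub> p w'"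
    and p_act: "\<And>w b. w \<in> {..<m} \<rightarrow>\<^sub>E carrier B \<Longrightarrow> b \<in> carrier B \<Longrightarrow>
      p (vrmul B m w b) = p w \<otimes>\<^bsub>A\<^esub> \<iota> b"
    using p by (simp_all add: rhom_def pow_carrier_def actA_def pow_add_eq_vadd pow_act_eq_vrmul)
  have \<iota>_closed: "\<And>b. b \<in> carrier B \<Longrightarrow> \<iota> b \<in> carrier A"
    using \<iota> by (simp add: ring_hom_closed)
  have "p (vtrunc B m v k) = finsum A (\<lambda>j. p (vsingle B m j \<one>\<^bsub>B\<^esub>) \<otimes>\<^bsub>A\<^esub> \<iota> (v j)) {..<k}"
    if "k \<le> m" for k
    using that
  proof (induction k)
    case 0
    have "p (vtrunc B m v 0) \<oplus>\<^bsub>A\<^esub> p (vtrunc B m v 0) = p (vtrunc B m v 0)"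
      using p_add[OF B.vtrunc_closed[OF v, of 0] B.vtrunc_closed[OF v, of 0]]
        B.vtrunc_0[of m v, symmetric] by simp
    then show ?case
      using p_closed[OF B.vtrunc_closed[OF v]] A.add.l_cancel_one' by simp
  next
    case (Suc k)
    then have vk: "v k \<in> carrier B"
      using PiE_mem[OF v] by simp
    have "p (vtrunc B m v (Suc k)) = p (vtrunc B m v k) \<oplus>\<^bsub>A\<^esub> p (vsingle B m k (v k))"
      unfolding B.vtrunc_Suc[OF v] by (rule p_add[OF B.vtrunc_closed[OF v] B.vsingle_closed[OF vk]])
    moreover have "p (vsingle B m k (v k)) = p (vsingle B m k \<one>\<^bsub>B\<^esub>) \<otimes>\<^bsub>A\<^esub> \<iota> (v k)"
      unfolding B.vsingle_eq_vrmul[OF vk, of m k] by (rule p_act[OF B.vsingle_closed[OF B.one_closed] vk])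
    moreover have "p (vsingle B m k \<one>\<^bsub>B\<^esub>) \<otimes>\<^bsub>A\<^esub> \<iota> (v k) \<in> carrier A"
      using p_closed[OF B.vsingle_closed[OF B.one_closed]] \<iota>_closed[OF vk] by simp
    moreover have "(\<lambda>j. p (vsingle B m j \<one>\<^bsub>B\<^esub>) \<otimes>\<^bsub>A\<^esub> \<iota> (v j)) \<in> {..<k} \<rightarrow> carrier A"
      using p_closed[OF B.vsingle_closed[OF B.one_closed]] \<iota>_closed PiE_mem[OF v] Suc.prems by simp
    ultimately show ?case
      using Suc by (simp add: A.finsum_insert lessThan_Suc A.add.m_comm)
  qed
  from this[of m] show ?thesis
    using B.vtrunc_self[OF v] by simp
qed

lemma fg_projective_dual_basis:
  assumes "ring A" "ring B" and \<iota>: "\<iota> \<in> ring_hom B A" and "fg_projective A B \<iota>"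
  obtains m :: nat and x f where "\<And>j. j < m \<Longrightarrow> x j \<in> carrier A" "\<And>j. j < m \<Longrightarrow> f j \<in> HomAB A B \<iota>"
    "\<And>a. a \<in> carrier A \<Longrightarrow> a = finsum A (\<lambda>j. x j \<otimes>\<^bsub>A\<^esub> \<iota> (f j a)) {..<m}"
proof -
  interpret A: ring A by fact
  interpret B: ring B by fact
  obtain m p s where
    p: "rhom (pow_carrier (carrier B) m) (pow_add m (add B)) (pow_act m (mult B))
      (carrier A) (add A) (actA A \<iota>) (carrier B) p" and
    s: "rhom (carrier A) (add A) (actA A \<iota>)
      (pow_carrier (carrier B) m) (pow_add m (add B)) (pow_act m (mult B)) (carrier B) s" and
    ps: "\<forall>a\<in>carrier A. p (s a) = a"
    using \<open>fg_projective A B \<iota>\<close> unfolding fg_projective_def by blast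
  define x where "x j = p (vsingle B m j \<one>\<^bsub>B\<^esub>)" for j
  define f where "f j = (\<lambda>a\<in>carrier A. s a j)" for j
  have s_closed: "\<And>a. a \<in> carrier A \<Longrightarrow> s a \<in> {..<m} \<rightarrow>\<^sub>E carrier B"
    using s by (simp add: rhom_def pow_carrier_def)
  show thesis
  proof (rule that)
    show "x j \<in> carrier A" for j
      using p B.vsingle_closed[of "\<one>\<^bsub>B\<^esub>"] by (simp add: x_def rhom_def pow_carrier_def)
    show "f j \<in> HomAB A B \<iota>" if "j < m" for j
      using s that ring_hom_closed[OF \<iota>]
      by (auto simp: HomAB_def rhom_def f_def actA_def pow_add_def pow_act_def pow_carrier_def)
    show "a = finsum A (\<lambda>j. x j \<otimes>\<^bsub>A\<^esub> \<iota> (f j a)) {..<m}" if a: "a \<in> carrier A" for a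
    proof -
      have "a = p (s a)"
        using ps a by simp
      also have "\<dots> = finsum A (\<lambda>j. x j \<otimes>\<^bsub>A\<^esub> \<iota> (s a j)) {..<m}"
        unfolding x_def by (rule free_module_hom_eq_finsum[OF assms(1-3) p s_closed[OF a]])
      finally show ?thesis
        using a by (simp add: f_def)
    qed
  qed
qed

text \<open>That \<open>E\<close> is a ring and \<open>lmult A\<close> a ring homomorphism holds for every extension; here both
  are taken from the hypothesis that \<open>E | A\<close> is an extension.\<close>

locale frobenius_setting =
  A: ring A + B: ring B + E: ring "End_ring A B \<iota>"
  for A :: "'a ring" and B :: "'b ring" and \<iota> :: "'b \<Rightarrow> 'a" +
  fixes \<theta> :: "'a \<Rightarrow> 'a \<Rightarrow> 'b"
  assumes iota_hom: "\<iota> \<in> ring_hom B A"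
    and lmult_hom: "lmult A \<in> ring_hom A (End_ring A B \<iota>)"
    and fg_proj: "fg_projective A B \<iota>"
    and theta_bij: "bij_betw \<theta> (carrier A) (HomAB A B \<iota>)"
    and theta_left: "\<forall>b\<in>carrier B. \<forall>a\<in>carrier A.
      \<theta> (\<iota> b \<otimes>\<^bsub>A\<^esub> a) = (\<lambda>x\<in>carrier A. b \<otimes>\<^bsub>B\<^esub> \<theta> a x)"
    and theta_right: "\<forall>a\<in>carrier A. \<forall>a'\<in>carrier A.
      \<theta> (a \<otimes>\<^bsub>A\<^esub> a') = (\<lambda>x\<in>carrier A. \<theta> a (a' \<otimes>\<^bsub>A\<^esub> x))"
begin

abbreviation "E \<equiv> End_ring A B \<iota>"
abbreviation "lm \<equiv> lmult A"

definition Ef :: "'a \<Rightarrow> 'b" where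
  "Ef = \<theta> \<one>\<^bsub>A\<^esub>"

lemma iota_closed [simp]: "b \<in> carrier B \<Longrightarrow> \<iota> b \<in> carrier A"
  using iota_hom by (simp add: ring_hom_closed)

lemma iota_mult: "b \<in> carrier B \<Longrightarrow> b' \<in> carrier B \<Longrightarrow> \<iota> (b \<otimes>\<^bsub>B\<^esub> b') = \<iota> b \<otimes>\<^bsub>A\<^esub> \<iota> b'"
  using iota_hom by (simp add: ring_hom_mult)

lemma iota_add: "b \<in> carrier B \<Longrightarrow> b' \<in> carrier B \<Longrightarrow> \<iota> (b \<oplus>\<^bsub>B\<^esub> b') = \<iota> b \<oplus>\<^bsub>A\<^esub> \<iota> b'"
  using iota_hom by (simp add: ring_hom_add)

lemma End_carrier_iff: "f \<in> carrier E \<longleftrightarrow> f \<in> carrier A \<rightarrow>\<^sub>E carrier A \<and>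
    rhom (carrier A) (add A) (actA A \<iota>) (carrier A) (add A) (actA A \<iota>) (carrier B) f"
  by (simp add: End_ring_def)

lemma End_one: "\<one>\<^bsub>E\<^esub> = (\<lambda>x\<in>carrier A. x)"
  by (simp add: End_ring_def)

lemma End_mult_apply: "x \<in> carrier A \<Longrightarrow> (f \<otimes>\<^bsub>E\<^esub> g) x = f (g x)"
  by (simp add: End_ring_def compose_def)

lemma End_add_apply: "x \<in> carrier A \<Longrightarrow> (f \<oplus>\<^bsub>E\<^esub> g) x = f x \<oplus>\<^bsub>A\<^esub> g x"
  by (simp add: End_ring_def)

lemma End_closed: "f \<in> carrier E \<Longrightarrow> x \<in> carrier A \<Longrightarrow> f x \<in> carrier A"
  by (auto simp: End_carrier_iff)

lemma End_add: "f \<in> carrier E \<Longrightarrow> x \<in> carrier A \<Longrightarrow> y \<in> carrier A \<Longrightarrow>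
    f (x \<oplus>\<^bsub>A\<^esub> y) = f x \<oplus>\<^bsub>A\<^esub> f y"
  by (auto simp: End_carrier_iff rhom_def)

lemma End_iota: "f \<in> carrier E \<Longrightarrow> x \<in> carrier A \<Longrightarrow> b \<in> carrier B \<Longrightarrow>
    f (x \<otimes>\<^bsub>A\<^esub> \<iota> b) = f x \<otimes>\<^bsub>A\<^esub> \<iota> b"
  by (auto simp: End_carrier_iff rhom_def actA_def)

lemma End_eqI:
  "f \<in> carrier E \<Longrightarrow> g \<in> carrier E \<Longrightarrow> (\<And>x. x \<in> carrier A \<Longrightarrow> f x = g x) \<Longrightarrow> f = g"
  by (rule PiE_ext[of f "carrier A" "\<lambda>_. carrier A" g]) (simp_all add: End_carrier_iff)

lemma End_finsum_arg:
  "f \<in> carrier E \<Longrightarrow> g \<in> I \<rightarrow> carrier A \<Longrightarrow> finite I \<Longrightarrow>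
    f (finsum A g I) = finsum A (\<lambda>i. f (g i)) I"
  by (rule additive_finsum) (simp_all add: End_closed End_add A.abelian_group_axioms)

lemma End_finsum_apply:
  "h \<in> I \<rightarrow> carrier E \<Longrightarrow> finite I \<Longrightarrow> w \<in> carrier A \<Longrightarrow>
    (finsum E h I) w = finsum A (\<lambda>i. h i w) I"
  by (rule additive_finsum[where h = "\<lambda>f. f w"])
    (simp_all add: End_closed End_add_apply A.abelian_group_axioms E.abelian_group_axioms)

lemma lmult_closed: "a \<in> carrier A \<Longrightarrow> lm a \<in> carrier E"
  using lmult_hom by (simp add: ring_hom_closed)

lemma lmult_apply: "x \<in> carrier A \<Longrightarrow> lm a x = a \<otimes>\<^bsub>A\<^esub> x"
  by (simp add: lmult_def)

lemma lmult_mult: "a \<in> carrier A \<Longrightarrow> b \<in> carrier A \<Longrightarrow> lm (a \<otimes>\<^bsub>A\<^esub> b) = lm a \<otimes>\<^bsub>E\<^esub> lm b"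
  using lmult_hom by (simp add: ring_hom_mult)

lemma lmult_add: "a \<in> carrier A \<Longrightarrow> b \<in> carrier A \<Longrightarrow> lm (a \<oplus>\<^bsub>A\<^esub> b) = lm a \<oplus>\<^bsub>E\<^esub> lm b"
  using lmult_hom by (simp add: ring_hom_add)

lemma lmult_one: "lm \<one>\<^bsub>A\<^esub> = \<one>\<^bsub>E\<^esub>"
  using lmult_hom by (simp add: ring_hom_one)

definition lmult_vec :: "nat \<Rightarrow> (nat \<Rightarrow> 'a) \<Rightarrow> (nat \<Rightarrow> ('a \<Rightarrow> 'a))" where
  "lmult_vec n v = (\<lambda>i\<in>{..<n}. lm (v i))"

lemma lmult_vec_closed:
  assumes "v \<in> {..<n} \<rightarrow>\<^sub>E carrier A"
  shows "lmult_vec n v \<in> {..<n} \<rightarrow>\<^sub>E carrier E"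
  unfolding lmult_vec_def by (intro PiE_I) (simp_all add: lmult_closed PiE_mem[OF assms])

lemma lmult_vec_vadd:
  assumes "v \<in> {..<n} \<rightarrow>\<^sub>E carrier A" "w \<in> {..<n} \<rightarrow>\<^sub>E carrier A"
  shows "lmult_vec n (vadd A n v w) = vadd E n (lmult_vec n v) (lmult_vec n w)"
  unfolding lmult_vec_def vadd_def
  by (rule restrict_ext) (simp add: lmult_add PiE_mem[OF assms(1)] PiE_mem[OF assms(2)])

lemma lmult_vec_vlmul:
  assumes "v \<in> {..<n} \<rightarrow>\<^sub>E carrier A" "s \<in> carrier A"
  shows "lmult_vec n (vlmul A n s v) = vlmul E n (lm s) (lmult_vec n v)"
  unfolding lmult_vec_def vlmul_def
  by (rule restrict_ext) (simp add: lmult_mult PiE_mem[OF assms(1)] assms(2))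

lemma lmult_vec_vrmul:
  assumes "v \<in> {..<n} \<rightarrow>\<^sub>E carrier A" "s \<in> carrier A"
  shows "lmult_vec n (vrmul A n v s) = vrmul E n (lmult_vec n v) (lm s)"
  unfolding lmult_vec_def vrmul_def
  by (rule restrict_ext) (simp add: lmult_mult PiE_mem[OF assms(1)] assms(2))

lemma theta_closed: "a \<in> carrier A \<Longrightarrow> \<theta> a \<in> HomAB A B \<iota>"
  using theta_bij by (auto simp: bij_betw_def)

lemma Ef_hom: "Ef \<in> HomAB A B \<iota>"
  unfolding Ef_def by (rule theta_closed) simp

lemma Ef_closed [simp]: "x \<in> carrier A \<Longrightarrow> Ef x \<in> carrier B"
  using Ef_hom by (auto simp: HomAB_def)

lemma Ef_add: "x \<in> carrier A \<Longrightarrow> y \<in> carrier A \<Longrightarrow> Ef (x \<oplus>\<^bsub>A\<^esub> y) = Ef x \<oplus>\<^bsub>B\<^esub> Ef y"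
  using Ef_hom by (auto simp: HomAB_def rhom_def)

lemma Ef_iota_right: "x \<in> carrier A \<Longrightarrow> b \<in> carrier B \<Longrightarrow> Ef (x \<otimes>\<^bsub>A\<^esub> \<iota> b) = Ef x \<otimes>\<^bsub>B\<^esub> b"
  using Ef_hom by (auto simp: HomAB_def rhom_def actA_def)

lemma theta_eq: "a \<in> carrier A \<Longrightarrow> \<theta> a = (\<lambda>x\<in>carrier A. Ef (a \<otimes>\<^bsub>A\<^esub> x))"
  using theta_right[rule_format, of "\<one>\<^bsub>A\<^esub>" a] by (simp add: Ef_def)

lemma Ef_iota_left:
  assumes "b \<in> carrier B" "x \<in> carrier A"
  shows "Ef (\<iota> b \<otimes>\<^bsub>A\<^esub> x) = b \<otimes>\<^bsub>B\<^esub> Ef x"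
proof -
  have "\<theta> (\<iota> b) x = b \<otimes>\<^bsub>B\<^esub> Ef x"
    using theta_left[rule_format, of b "\<one>\<^bsub>A\<^esub>"] assms by (simp add: Ef_def)
  then show ?thesis
    using theta_eq[of "\<iota> b"] assms by simp
qed

lemma Ef_nondegenerate:
  assumes "c \<in> carrier A" "a \<in> carrier A" "\<And>w. w \<in> carrier A \<Longrightarrow> Ef (c \<otimes>\<^bsub>A\<^esub> w) = Ef (a \<otimes>\<^bsub>A\<^esub> w)"
  shows "c = a"
proof -
  have "\<theta> c = \<theta> a"
    using assms by (simp add: theta_eq cong: restrict_cong)
  then show ?thesis
    using theta_bij assms(1,2) by (auto simp: bij_betw_def inj_on_def)
qed

lemma Ef_represents:
  assumes "h \<in> HomAB A B \<iota>"
  obtains c where "c \<in> carrier A" "\<And>w. w \<in> carrier A \<Longrightarrow> Ef (c \<otimes>\<^bsub>A\<^esub> w) = h w"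
proof -
  obtain c where c: "c \<in> carrier A" "h = \<theta> c"
    using assms theta_bij unfolding bij_betw_def by blast
  show thesis
  proof (rule that[OF c(1)])
    show "Ef (c \<otimes>\<^bsub>A\<^esub> w) = h w" if "w \<in> carrier A" for w
      using that c theta_eq[OF c(1)] by simp
  qed
qed

lemma Ef_finsum:
  "g \<in> I \<rightarrow> carrier A \<Longrightarrow> finite I \<Longrightarrow> Ef (finsum A g I) = finsum B (\<lambda>i. Ef (g i)) I"
  by (rule additive_finsum) (simp_all add: Ef_add A.abelian_group_axioms B.abelian_group_axioms)

definition Ef_rep :: "('a \<Rightarrow> 'a) \<Rightarrow> 'a" where
  "Ef_rep f = (THE c. c \<in> carrier A \<and> (\<forall>w\<in>carrier A. Ef (c \<otimes>\<^bsub>A\<^esub> w) = Ef (f w)))"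

lemma Ef_rep_spec:
  assumes f: "f \<in> carrier E"
  shows Ef_rep_closed: "Ef_rep f \<in> carrier A"
    and Ef_rep_Ef: "\<And>w. w \<in> carrier A \<Longrightarrow> Ef (Ef_rep f \<otimes>\<^bsub>A\<^esub> w) = Ef (f w)"
proof -
  have "(\<lambda>w\<in>carrier A. Ef (f w)) \<in> HomAB A B \<iota>"
    using f by (auto simp: HomAB_def rhom_def actA_def End_closed End_add End_iota Ef_add Ef_iota_right)
  then obtain c where c: "c \<in> carrier A" "\<And>w. w \<in> carrier A \<Longrightarrow> Ef (c \<otimes>\<^bsub>A\<^esub> w) = Ef (f w)"
    by (rule Ef_represents) simp
  have "Ef_rep f = c"
    unfolding Ef_rep_def
    by (rule the_equality) (use c Ef_nondegenerate in auto)
  with c show "Ef_rep f \<in> carrier A" "\<And>w. w \<in> carrier A \<Longrightarrow> Ef (Ef_rep f \<otimes>\<^bsub>A\<^esub> w) = Ef (f w)"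
    by auto
qed

lemma Ef_rep_unique:
  assumes "f \<in> carrier E" "c \<in> carrier A" "\<And>w. w \<in> carrier A \<Longrightarrow> Ef (c \<otimes>\<^bsub>A\<^esub> w) = Ef (f w)"
  shows "Ef_rep f = c"
  using Ef_nondegenerate[of "Ef_rep f" c] assms Ef_rep_spec by auto

lemma Ef_rep_lmult: "a \<in> carrier A \<Longrightarrow> Ef_rep (lm a) = a"
  by (rule Ef_rep_unique) (auto simp: lmult_closed lmult_apply)

lemma Ef_rep_one: "Ef_rep \<one>\<^bsub>E\<^esub> = \<one>\<^bsub>A\<^esub>"
  using Ef_rep_lmult[of "\<one>\<^bsub>A\<^esub>"] lmult_one by simp

lemma Ef_rep_add: "f \<in> carrier E \<Longrightarrow> g \<in> carrier E \<Longrightarrow> Ef_rep (f \<oplus>\<^bsub>E\<^esub> g) = Ef_rep f \<oplus>\<^bsub>A\<^esub> Ef_rep g"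
  by (rule Ef_rep_unique) (auto simp: End_add_apply A.l_distr Ef_add Ef_rep_spec End_closed)

lemma Ef_rep_mult_left:
  "s \<in> carrier E \<Longrightarrow> e \<in> carrier E \<Longrightarrow> Ef_rep (s \<otimes>\<^bsub>E\<^esub> e) = Ef_rep (lm (Ef_rep s) \<otimes>\<^bsub>E\<^esub> e)"
  by (rule Ef_rep_unique) (auto simp: End_mult_apply Ef_rep_spec End_closed lmult_apply lmult_closed)

lemma Ef_rep_lmult_iota_mult:
  "b \<in> carrier B \<Longrightarrow> f \<in> carrier E \<Longrightarrow> Ef_rep (lm (\<iota> b) \<otimes>\<^bsub>E\<^esub> f) = \<iota> b \<otimes>\<^bsub>A\<^esub> Ef_rep f"
  by (rule Ef_rep_unique)
    (auto simp: End_mult_apply Ef_rep_spec End_closed lmult_apply lmult_closed A.m_assoc Ef_iota_left)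

lemma Ef_rep_mult_lmult:
  "f \<in> carrier E \<Longrightarrow> r \<in> carrier A \<Longrightarrow> Ef_rep (f \<otimes>\<^bsub>E\<^esub> lm r) = Ef_rep f \<otimes>\<^bsub>A\<^esub> r"
  by (rule Ef_rep_unique) (auto simp: End_mult_apply Ef_rep_spec End_closed lmult_apply lmult_closed A.m_assoc)

definition dyad :: "'a \<Rightarrow> 'a \<Rightarrow> ('a \<Rightarrow> 'a)" where
  "dyad a a' = (\<lambda>x\<in>carrier A. a \<otimes>\<^bsub>A\<^esub> \<iota> (Ef (a' \<otimes>\<^bsub>A\<^esub> x)))"

lemma dyad_apply: "x \<in> carrier A \<Longrightarrow> dyad a a' x = a \<otimes>\<^bsub>A\<^esub> \<iota> (Ef (a' \<otimes>\<^bsub>A\<^esub> x))"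
  by (simp add: dyad_def)

lemma dyad_closed:
  assumes a: "a \<in> carrier A" and a': "a' \<in> carrier A"
  shows "dyad a a' \<in> carrier E"
proof -
  have "dyad a a' (x \<otimes>\<^bsub>A\<^esub> \<iota> b) = dyad a a' x \<otimes>\<^bsub>A\<^esub> \<iota> b"
    if x: "x \<in> carrier A" and b: "b \<in> carrier B" for x b
    using a a' x b by (simp add: dyad_apply A.m_assoc[symmetric] Ef_iota_right iota_mult)
  with a a' show ?thesis
    by (auto simp: End_carrier_iff rhom_def actA_def dyad_def A.r_distr Ef_add iota_add)
qed

lemma dyad_add_left: "x \<in> carrier A \<Longrightarrow> y \<in> carrier A \<Longrightarrow> z \<in> carrier A \<Longrightarrow>
    dyad (x \<oplus>\<^bsub>A\<^esub> y) z = dyad x z \<oplus>\<^bsub>E\<^esub> dyad y z"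
  by (rule ext) (simp add: End_ring_def dyad_def A.l_distr)

lemma dyad_add_right: "x \<in> carrier A \<Longrightarrow> y \<in> carrier A \<Longrightarrow> z \<in> carrier A \<Longrightarrow>
    dyad x (y \<oplus>\<^bsub>A\<^esub> z) = dyad x y \<oplus>\<^bsub>E\<^esub> dyad x z"
  by (rule ext) (simp add: End_ring_def dyad_def A.l_distr A.r_distr Ef_add iota_add)

lemma dyad_balance: "x \<in> carrier A \<Longrightarrow> z \<in> carrier A \<Longrightarrow> d \<in> carrier B \<Longrightarrow>
    dyad (x \<otimes>\<^bsub>A\<^esub> \<iota> d) z = dyad x (\<iota> d \<otimes>\<^bsub>A\<^esub> z)"
  by (rule ext) (simp add: dyad_def A.m_assoc Ef_iota_left iota_mult)

lemma lmult_mult_dyad: "s \<in> carrier A \<Longrightarrow> a \<in> carrier A \<Longrightarrow> a' \<in> carrier A \<Longrightarrow>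
    lm s \<otimes>\<^bsub>E\<^esub> dyad a a' = dyad (s \<otimes>\<^bsub>A\<^esub> a) a'"
  by (rule ext) (simp add: End_ring_def compose_def dyad_def lmult_apply A.m_assoc)

lemma dyad_mult_lmult: "r \<in> carrier A \<Longrightarrow> a \<in> carrier A \<Longrightarrow> a' \<in> carrier A \<Longrightarrow>
    dyad a a' \<otimes>\<^bsub>E\<^esub> lm r = dyad a (a' \<otimes>\<^bsub>A\<^esub> r)"
  by (rule ext) (simp add: End_ring_def compose_def dyad_def lmult_apply A.m_assoc)

end

locale frobenius_dual_basis = frobenius_setting +
  fixes m :: nat and xb yb :: "nat \<Rightarrow> 'a"
  assumes xb_closed: "\<And>j. j < m \<Longrightarrow> xb j \<in> carrier A"
    and yb_closed: "\<And>j. j < m \<Longrightarrow> yb j \<in> carrier A"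
    and dual_basis: "\<And>a. a \<in> carrier A \<Longrightarrow>
      a = finsum A (\<lambda>j. xb j \<otimes>\<^bsub>A\<^esub> \<iota> (\<theta> \<one>\<^bsub>A\<^esub> (yb j \<otimes>\<^bsub>A\<^esub> a))) {..<m}"

lemma (in frobenius_setting) frobenius_dual_basis_exists:
  obtains m xb yb where "frobenius_dual_basis A B \<iota> \<theta> m xb yb"
proof -
  obtain m :: nat and xb f where xb: "\<And>j. j < m \<Longrightarrow> xb j \<in> carrier A"
    and f: "\<And>j. j < m \<Longrightarrow> f j \<in> HomAB A B \<iota>"
    and basis: "\<And>a. a \<in> carrier A \<Longrightarrow> a = finsum A (\<lambda>j. xb j \<otimes>\<^bsub>A\<^esub> \<iota> (f j a)) {..<m}"
    using fg_projective_dual_basis[OF A.ring_axioms B.ring_axioms iota_hom fg_proj] by blast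
  define yb where "yb j = inv_into (carrier A) \<theta> (f j)" for j
  have yb: "yb j \<in> carrier A" "\<theta> (yb j) = f j" if "j < m" for j
    using f[OF that] theta_bij unfolding yb_def bij_betw_def
    by (auto intro: inv_into_into f_inv_into_f)
  have "a = finsum A (\<lambda>j. xb j \<otimes>\<^bsub>A\<^esub> \<iota> (\<theta> \<one>\<^bsub>A\<^esub> (yb j \<otimes>\<^bsub>A\<^esub> a))) {..<m}"
    if a: "a \<in> carrier A" for a
  proof -
    have "f j a = \<theta> \<one>\<^bsub>A\<^esub> (yb j \<otimes>\<^bsub>A\<^esub> a)" if "j < m" for j
      using yb[OF that] theta_eq[of "yb j"] a by (metis Ef_def restrict_apply')
    then have "finsum A (\<lambda>j. xb j \<otimes>\<^bsub>A\<^esub> \<iota> (f j a)) {..<m}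
        = finsum A (\<lambda>j. xb j \<otimes>\<^bsub>A\<^esub> \<iota> (\<theta> \<one>\<^bsub>A\<^esub> (yb j \<otimes>\<^bsub>A\<^esub> a))) {..<m}"
      by (intro A.finsum_cong') (simp_all add: xb yb a Pi_def flip: Ef_def)
    with basis[OF a] show ?thesis
      by simp
  qed
  with xb yb show thesis
    by (intro that frobenius_dual_basis.intro frobenius_setting.intro frobenius_dual_basis_axioms.intro
        A.ring_axioms B.ring_axioms E.ring_axioms frobenius_setting_axioms)
qed

context frobenius_dual_basis
begin

lemma dual_basis_left:
  "a \<in> carrier A \<Longrightarrow> a = finsum A (\<lambda>j. xb j \<otimes>\<^bsub>A\<^esub> \<iota> (Ef (yb j \<otimes>\<^bsub>A\<^esub> a))) {..<m}"
  using dual_basis by (simp add: Ef_def)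

text \<open>The right-handed expansion follows from the left-handed one by nondegeneracy of \<open>Ef\<close>.\<close>

lemma dual_basis_right:
  assumes a: "a \<in> carrier A"
  shows "a = finsum A (\<lambda>j. \<iota> (Ef (a \<otimes>\<^bsub>A\<^esub> xb j)) \<otimes>\<^bsub>A\<^esub> yb j) {..<m}"
proof (rule sym, rule Ef_nondegenerate)
  let ?g = "\<lambda>j. \<iota> (Ef (a \<otimes>\<^bsub>A\<^esub> xb j)) \<otimes>\<^bsub>A\<^esub> yb j"
  have g: "?g \<in> {..<m} \<rightarrow> carrier A"
    using a xb_closed yb_closed by simp
  show "finsum A ?g {..<m} \<in> carrier A"
    using A.finsum_closed[OF g] .
  show "a \<in> carrier A"
    by (rule a)
  fix w
  assume w: "w \<in> carrier A"
  have "Ef (finsum A ?g {..<m} \<otimes>\<^bsub>A\<^esub> w) = Ef (finsum A (\<lambda>j. ?g j \<otimes>\<^bsub>A\<^esub> w) {..<m})"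
    using A.finsum_ldistr[OF _ w g] by simp
  also have "\<dots> = finsum B (\<lambda>j. Ef (?g j \<otimes>\<^bsub>A\<^esub> w)) {..<m}"
    by (rule Ef_finsum) (use a xb_closed yb_closed w in auto)
  also have "\<dots> = finsum B (\<lambda>j. Ef (a \<otimes>\<^bsub>A\<^esub> xb j) \<otimes>\<^bsub>B\<^esub> Ef (yb j \<otimes>\<^bsub>A\<^esub> w)) {..<m}"
    by (rule B.finsum_cong') (use a xb_closed yb_closed w in \<open>auto simp: A.m_assoc Ef_iota_left\<close>)
  also have "\<dots> = finsum B (\<lambda>j. Ef ((a \<otimes>\<^bsub>A\<^esub> xb j) \<otimes>\<^bsub>A\<^esub> \<iota> (Ef (yb j \<otimes>\<^bsub>A\<^esub> w)))) {..<m}"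
    by (rule B.finsum_cong') (use a xb_closed yb_closed w in \<open>auto simp: Ef_iota_right\<close>)
  also have "\<dots> = Ef (finsum A (\<lambda>j. a \<otimes>\<^bsub>A\<^esub> (xb j \<otimes>\<^bsub>A\<^esub> \<iota> (Ef (yb j \<otimes>\<^bsub>A\<^esub> w)))) {..<m})"
    by (subst Ef_finsum) (use a xb_closed yb_closed w in \<open>auto simp: A.m_assoc intro!: B.finsum_cong'\<close>)
  also have "\<dots> = Ef (a \<otimes>\<^bsub>A\<^esub> w)"
    using A.finsum_rdistr[OF _ a, of "{..<m}" "\<lambda>j. xb j \<otimes>\<^bsub>A\<^esub> \<iota> (Ef (yb j \<otimes>\<^bsub>A\<^esub> w))"]
      dual_basis_left[OF w] xb_closed yb_closed w
    by (auto simp: Pi_def)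
  finally show "Ef (finsum A ?g {..<m} \<otimes>\<^bsub>A\<^esub> w) = Ef (a \<otimes>\<^bsub>A\<^esub> w)" .
qed

section \<open>The isomorphism \<open>E \<cong> A \<otimes>\<^sub>B A\<close>\<close>

definition End_to_tens :: "('a \<Rightarrow> 'a) \<Rightarrow> (int \<times> 'a \<times> 'a) list" where
  "End_to_tens f = map (\<lambda>j. (1, f (xb j), yb j)) [0..<m]"

lemma End_to_tens_tfree: "f \<in> carrier E \<Longrightarrow> End_to_tens f \<in> tfree A"
  by (auto simp: End_to_tens_def tfree_def End_closed xb_closed yb_closed)

lemma End_to_tens_lmult_mult:
  "f \<in> carrier E \<Longrightarrow> s \<in> carrier A \<Longrightarrow> End_to_tens (lm s \<otimes>\<^bsub>E\<^esub> f) = tlact A s (End_to_tens f)"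
  by (simp add: End_to_tens_def tlact_def End_mult_apply lmult_apply xb_closed End_closed)

lemma End_to_tens_add:
  assumes f: "f \<in> carrier E" and g: "g \<in> carrier E"
  shows "tens_eq A B \<iota> (End_to_tens (f \<oplus>\<^bsub>E\<^esub> g)) (End_to_tens f @ End_to_tens g)"
proof -
  have "End_to_tens (f \<oplus>\<^bsub>E\<^esub> g) = concat (map (\<lambda>j. [(1, f (xb j) \<oplus>\<^bsub>A\<^esub> g (xb j), yb j)]) [0..<m])"
    by (simp add: End_to_tens_def End_add_apply xb_closed)
  also have "tens_eq A B \<iota> \<dots> (concat (map (\<lambda>j. [(1, f (xb j), yb j)] @ [(1, g (xb j), yb j)]) [0..<m]))"
    by (rule tens_eq_concat) (use f g xb_closed yb_closed in \<open>simp add: End_closed tens_eq_add_left\<close>)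
  also have "tens_eq A B \<iota> \<dots> (End_to_tens f @ End_to_tens g)"
    by (rule tens_eq_if_tfsum_eq) (simp only: tfsum_concat_map_append, simp add: End_to_tens_def)
  finally show ?thesis .
qed

lemma End_to_tens_finsum:
  assumes "h \<in> {..<k} \<rightarrow> carrier E"
  shows "tens_eq A B \<iota> (End_to_tens (finsum E h {..<k})) (concat (map (\<lambda>l. End_to_tens (h l)) [0..<k]))"
  using assms
proof (induction k)
  case 0
  have "tens_eq A B \<iota> (End_to_tens \<zero>\<^bsub>E\<^esub>) (End_to_tens \<zero>\<^bsub>E\<^esub> @ End_to_tens \<zero>\<^bsub>E\<^esub>)"
    using End_to_tens_add[of "\<zero>\<^bsub>E\<^esub>" "\<zero>\<^bsub>E\<^esub>"] by simp
  from tens_eq_Nil_if_double[OF this] show ?case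
    by simp
next
  case (Suc k)
  then have h: "h \<in> {..<k} \<rightarrow> carrier E" and hk: "h k \<in> carrier E"
    by auto
  have "End_to_tens (finsum E h {..<Suc k}) = End_to_tens (h k \<oplus>\<^bsub>E\<^esub> finsum E h {..<k})"
    using h hk by (simp add: lessThan_Suc E.finsum_insert)
  also have "tens_eq A B \<iota> \<dots> (End_to_tens (h k) @ End_to_tens (finsum E h {..<k}))"
    by (rule End_to_tens_add[OF hk E.finsum_closed[OF h]])
  also have "tens_eq A B \<iota> \<dots> (End_to_tens (h k) @ concat (map (\<lambda>l. End_to_tens (h l)) [0..<k]))"
    by (rule tens_eq_append[OF tens_eq_refl Suc.IH[OF h]])
  also have "tens_eq A B \<iota> \<dots> (concat (map (\<lambda>l. End_to_tens (h l)) [0..<k]) @ End_to_tens (h k))"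
    by (rule tens_eq_append_commute)
  finally show ?case
    by simp
qed

lemma End_to_tens_dyad:
  assumes a: "a \<in> carrier A" and a': "a' \<in> carrier A"
  shows "tens_eq A B \<iota> (End_to_tens (dyad a a')) [(1, a, a')]"
proof -
  have "End_to_tens (dyad a a') = concat (map (\<lambda>j. [(1, a \<otimes>\<^bsub>A\<^esub> \<iota> (Ef (a' \<otimes>\<^bsub>A\<^esub> xb j)), yb j)]) [0..<m])"
    by (simp add: End_to_tens_def dyad_apply xb_closed cong: map_cong)
  also have "tens_eq A B \<iota> \<dots> (concat (map (\<lambda>j. [(1, a, \<iota> (Ef (a' \<otimes>\<^bsub>A\<^esub> xb j)) \<otimes>\<^bsub>A\<^esub> yb j)]) [0..<m]))"
    by (rule tens_eq_concat) (use a a' xb_closed yb_closed in \<open>auto intro: tens_eq_balance\<close>)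
  also have "tens_eq A B \<iota> \<dots> [(1, a, finsum A (\<lambda>j. \<iota> (Ef (a' \<otimes>\<^bsub>A\<^esub> xb j)) \<otimes>\<^bsub>A\<^esub> yb j) {..<m})]"
    by (rule tens_eq_sym, rule A.tens_eq_finsum_right[OF a]) (use a' xb_closed yb_closed in auto)
  also have "\<dots> = [(1, a, a')]"
    using dual_basis_right[OF a'] by simp
  finally show ?thesis .
qed

lemma End_to_tens_mult_lmult:
  assumes f: "f \<in> carrier E" and r: "r \<in> carrier A"
  shows "tens_eq A B \<iota> (End_to_tens (f \<otimes>\<^bsub>E\<^esub> lm r)) (tract A r (End_to_tens f))"
proof -
  let ?h = "\<lambda>l. dyad (f (xb l)) (yb l \<otimes>\<^bsub>A\<^esub> r)"
  have h: "?h \<in> {..<m} \<rightarrow> carrier E"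
    using f r xb_closed yb_closed by (auto intro: dyad_closed simp: End_closed)
  txt \<open>Expand \<open>r w\<close> in the dual basis.\<close>
  have expand: "f \<otimes>\<^bsub>E\<^esub> lm r = finsum E ?h {..<m}"
  proof (rule End_eqI)
    show "f \<otimes>\<^bsub>E\<^esub> lm r \<in> carrier E"
      using f r lmult_closed by simp
    show "finsum E ?h {..<m} \<in> carrier E"
      using E.finsum_closed[OF h] .
    fix w
    assume w: "w \<in> carrier A"
    then have rw: "r \<otimes>\<^bsub>A\<^esub> w \<in> carrier A"
      using r by simp
    have "(f \<otimes>\<^bsub>E\<^esub> lm r) w = f (finsum A (\<lambda>j. xb j \<otimes>\<^bsub>A\<^esub> \<iota> (Ef (yb j \<otimes>\<^bsub>A\<^esub> (r \<otimes>\<^bsub>A\<^esub> w)))) {..<m})"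
      using dual_basis_left[OF rw] w by (simp add: End_mult_apply lmult_apply)
    also have "\<dots> = finsum A (\<lambda>j. f (xb j \<otimes>\<^bsub>A\<^esub> \<iota> (Ef (yb j \<otimes>\<^bsub>A\<^esub> (r \<otimes>\<^bsub>A\<^esub> w))))) {..<m}"
      by (rule End_finsum_arg[OF f]) (use xb_closed yb_closed rw in auto)
    also have "\<dots> = finsum A (\<lambda>l. ?h l w) {..<m}"
      by (rule A.finsum_cong') (use f xb_closed yb_closed r w in \<open>auto simp: dyad_apply End_iota A.m_assoc End_closed\<close>)
    also have "\<dots> = (finsum E ?h {..<m}) w"
      using End_finsum_apply[OF h _ w] by simp
    finally show "(f \<otimes>\<^bsub>E\<^esub> lm r) w = (finsum E ?h {..<m}) w" .
  qed
  have "tens_eq A B \<iota> (End_to_tens (f \<otimes>\<^bsub>E\<^esub> lm r)) (concat (map (\<lambda>l. End_to_tens (?h l)) [0..<m]))"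
    unfolding expand by (rule End_to_tens_finsum[OF h])
  also have "tens_eq A B \<iota> \<dots> (concat (map (\<lambda>l. [(1, f (xb l), yb l \<otimes>\<^bsub>A\<^esub> r)]) [0..<m]))"
    by (rule tens_eq_concat) (use f xb_closed yb_closed r in \<open>auto intro: End_to_tens_dyad simp: End_closed\<close>)
  also have "\<dots> = tract A r (End_to_tens f)"
    by (simp add: tract_def End_to_tens_def)
  finally show ?thesis .
qed

end

section \<open>Right D2 for \<open>E | A\<close> gives left D2 for \<open>A | B\<close>\<close>

locale frobenius_left_transfer = frobenius_dual_basis +
  T: tensor_retract "End_ring A B \<iota>" A "lmult A" "carrier (End_ring A B \<iota>)" "lmult A ` carrier A" n F G
  for n F G
begin

definition into_EE :: "'a \<Rightarrow> 'a \<Rightarrow> (int \<times> ('a \<Rightarrow> 'a) \<times> ('a \<Rightarrow> 'a)) list" where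
  "into_EE a a' = [(1, \<one>\<^bsub>E\<^esub>, dyad a a')]"

definition onto_AA :: "('a \<Rightarrow> 'a) \<Rightarrow> ('a \<Rightarrow> 'a) \<Rightarrow> (int \<times> 'a \<times> 'a) list" where
  "onto_AA e e' = End_to_tens (lm (Ef_rep e) \<otimes>\<^bsub>E\<^esub> e')"

definition F_A :: "(int \<times> 'a \<times> 'a) list \<Rightarrow> nat \<Rightarrow> 'a" where
  "F_A L = (\<lambda>i\<in>{..<n}. Ef_rep (F (tmap into_EE L) i))"

definition G_A :: "(nat \<Rightarrow> 'a) \<Rightarrow> (int \<times> 'a \<times> 'a) list" where
  "G_A v = tmap onto_AA (G (lmult_vec n v))"

lemma into_EE_tfree: "L \<in> tfree A \<Longrightarrow> tmap into_EE L \<in> tfree E"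
  by (rule tfree_tmap) (auto simp: into_EE_def tfree_def dyad_closed)

lemma into_EE_balanced: "tens_balanced A B \<iota> E A lm into_EE"
  unfolding tens_balanced_def into_EE_def
  using tens_eq_add_right[of "\<one>\<^bsub>E\<^esub>" E _ _ A lm]
  by (simp add: dyad_add_left dyad_add_right dyad_balance dyad_closed tens_eq_refl)

lemma into_EE_tlact:
  assumes s: "s \<in> carrier A" and L: "L \<in> tfree A"
  shows "tens_eq E A lm (tmap into_EE (tlact A s L)) (tlact E (lm s) (tmap into_EE L))"
  unfolding tmap_tlact tlact_tmap
proof (rule tens_eq_tmap_cong)
  fix k x y
  assume "(k, x, y) \<in> set L"
  then have "x \<in> carrier A \<and> y \<in> carrier A"
    using L by (rule tfreeD)
  then show "tens_eq E A lm (into_EE (s \<otimes>\<^bsub>A\<^esub> x) y) (tlact E (lm s) (into_EE x y))"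
    using tens_eq_balance[of "\<one>\<^bsub>E\<^esub>" E "dyad x y" s A lm] s
    by (auto simp: into_EE_def lmult_mult_dyad lmult_closed dyad_closed intro: tens_eq_sym)
qed

lemma into_EE_tract:
  assumes r: "r \<in> carrier A" and L: "L \<in> tfree A"
  shows "tmap into_EE (tract A r L) = tract E (lm r) (tmap into_EE L)"
  unfolding tmap_tract tract_tmap
proof (rule tmap_cong)
  fix k x y
  assume "(k, x, y) \<in> set L"
  then have "x \<in> carrier A \<and> y \<in> carrier A"
    using L by (rule tfreeD)
  with r show "into_EE x (y \<otimes>\<^bsub>A\<^esub> r) = tract E (lm r) (into_EE x y)"
    by (simp add: into_EE_def dyad_mult_lmult)
qed

lemma onto_AA_tfree: "T \<in> tfree E \<Longrightarrow> tmap onto_AA T \<in> tfree A"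
  by (rule tfree_tmap) (simp_all add: onto_AA_def End_to_tens_tfree lmult_closed Ef_rep_closed)

lemma onto_AA_balanced: "tens_balanced E A lm A B \<iota> onto_AA"
  unfolding tens_balanced_def
proof (intro conjI ballI)
  fix x y z
  assume xyz: "x \<in> carrier E" "y \<in> carrier E" "z \<in> carrier E"
  have "lm (Ef_rep (x \<oplus>\<^bsub>E\<^esub> y)) \<otimes>\<^bsub>E\<^esub> z = lm (Ef_rep x) \<otimes>\<^bsub>E\<^esub> z \<oplus>\<^bsub>E\<^esub> lm (Ef_rep y) \<otimes>\<^bsub>E\<^esub> z"
    using xyz by (simp add: Ef_rep_add lmult_add lmult_closed Ef_rep_closed E.l_distr)
  then show "tens_eq A B \<iota> (onto_AA (x \<oplus>\<^bsub>E\<^esub> y) z) (onto_AA x z @ onto_AA y z)"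
    using End_to_tens_add[of "lm (Ef_rep x) \<otimes>\<^bsub>E\<^esub> z" "lm (Ef_rep y) \<otimes>\<^bsub>E\<^esub> z"] xyz
    by (simp add: onto_AA_def lmult_closed Ef_rep_closed)
  have "lm (Ef_rep x) \<otimes>\<^bsub>E\<^esub> (y \<oplus>\<^bsub>E\<^esub> z) = lm (Ef_rep x) \<otimes>\<^bsub>E\<^esub> y \<oplus>\<^bsub>E\<^esub> lm (Ef_rep x) \<otimes>\<^bsub>E\<^esub> z"
    using xyz by (simp add: lmult_closed Ef_rep_closed E.r_distr)
  then show "tens_eq A B \<iota> (onto_AA x (y \<oplus>\<^bsub>E\<^esub> z)) (onto_AA x y @ onto_AA x z)"
    using End_to_tens_add[of "lm (Ef_rep x) \<otimes>\<^bsub>E\<^esub> y" "lm (Ef_rep x) \<otimes>\<^bsub>E\<^esub> z"] xyz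
    by (simp add: onto_AA_def lmult_closed Ef_rep_closed)
next
  fix x z d
  assume xzd: "x \<in> carrier E" "z \<in> carrier E" "d \<in> carrier A"
  then have "lm (Ef_rep (x \<otimes>\<^bsub>E\<^esub> lm d)) \<otimes>\<^bsub>E\<^esub> z = lm (Ef_rep x) \<otimes>\<^bsub>E\<^esub> (lm d \<otimes>\<^bsub>E\<^esub> z)"
    by (simp add: Ef_rep_mult_lmult lmult_mult lmult_closed Ef_rep_closed E.m_assoc)
  then show "tens_eq A B \<iota> (onto_AA (x \<otimes>\<^bsub>E\<^esub> lm d) z) (onto_AA x (lm d \<otimes>\<^bsub>E\<^esub> z))"
    by (simp add: onto_AA_def tens_eq_refl)
qed

lemma onto_AA_into_EE:
  assumes L: "L \<in> tfree A"
  shows "tens_eq A B \<iota> (tmap onto_AA (tmap into_EE L)) L"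
  unfolding tmap_tmap
proof (rule tens_eq_tmap_ident)
  fix k x y
  assume "(k, x, y) \<in> set L"
  then have xy: "x \<in> carrier A" "y \<in> carrier A"
    using tfreeD[OF _ L] by auto
  then have "tmap onto_AA (into_EE x y) = End_to_tens (dyad x y)"
    by (simp add: into_EE_def onto_AA_def Ef_rep_one lmult_one dyad_closed)
  then show "tens_eq A B \<iota> (tmap onto_AA (into_EE x y)) [(1, x, y)]"
    using End_to_tens_dyad[OF xy] by simp
qed

lemma onto_AA_tlact:
  assumes b: "b \<in> carrier B" and T: "T \<in> tfree E"
  shows "tmap onto_AA (tlact E (lm (\<iota> b)) T) = tlact A (\<iota> b) (tmap onto_AA T)"
  unfolding tmap_tlact tlact_tmap
proof (rule tmap_cong)
  fix k x y
  assume "(k, x, y) \<in> set T"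
  then have xy: "x \<in> carrier E" "y \<in> carrier E"
    using tfreeD[OF _ T] by auto
  then have "lm (Ef_rep (lm (\<iota> b) \<otimes>\<^bsub>E\<^esub> x)) \<otimes>\<^bsub>E\<^esub> y = lm (\<iota> b) \<otimes>\<^bsub>E\<^esub> (lm (Ef_rep x) \<otimes>\<^bsub>E\<^esub> y)"
    using b by (simp add: Ef_rep_lmult_iota_mult lmult_mult lmult_closed Ef_rep_closed E.m_assoc)
  then show "onto_AA (lm (\<iota> b) \<otimes>\<^bsub>E\<^esub> x) y = tlact A (\<iota> b) (onto_AA x y)"
    using xy b by (simp add: onto_AA_def End_to_tens_lmult_mult lmult_closed Ef_rep_closed)
qed

lemma onto_AA_tract:
  assumes r: "r \<in> carrier A" and T: "T \<in> tfree E"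
  shows "tens_eq A B \<iota> (tmap onto_AA (tract E (lm r) T)) (tract A r (tmap onto_AA T))"
  unfolding tmap_tract tract_tmap
proof (rule tens_eq_tmap_cong)
  fix k x y
  assume "(k, x, y) \<in> set T"
  then have xy: "x \<in> carrier E" "y \<in> carrier E"
    using tfreeD[OF _ T] by auto
  then have "lm (Ef_rep x) \<otimes>\<^bsub>E\<^esub> (y \<otimes>\<^bsub>E\<^esub> lm r) = (lm (Ef_rep x) \<otimes>\<^bsub>E\<^esub> y) \<otimes>\<^bsub>E\<^esub> lm r"
    using r by (simp add: lmult_closed Ef_rep_closed E.m_assoc)
  then show "tens_eq A B \<iota> (onto_AA x (y \<otimes>\<^bsub>E\<^esub> lm r)) (tract A r (onto_AA x y))"
    using End_to_tens_mult_lmult[of "lm (Ef_rep x) \<otimes>\<^bsub>E\<^esub> y" r] xy r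
    by (simp add: onto_AA_def lmult_closed Ef_rep_closed)
qed

lemma F_A_closed: "L \<in> tfree A \<Longrightarrow> F_A L \<in> {..<n} \<rightarrow>\<^sub>E carrier A"
  unfolding F_A_def
  by (intro PiE_I) (simp_all add: Ef_rep_closed PiE_mem[OF T.F_closed[OF into_EE_tfree]])

lemma F_A_tens_eq:
  "L \<in> tfree A \<Longrightarrow> L' \<in> tfree A \<Longrightarrow> tens_eq A B \<iota> L L' \<Longrightarrow> F_A L = F_A L'"
  unfolding F_A_def
  using T.F_tens_eq[OF into_EE_tfree into_EE_tfree tens_eq_tmap[OF _ into_EE_balanced]] by simp

lemma F_A_append:
  assumes L: "L \<in> tfree A" and L': "L' \<in> tfree A"
  shows "F_A (L @ L') = vadd A n (F_A L) (F_A L')"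
  unfolding F_A_def vadd_def tmap_append T.F_append[OF into_EE_tfree[OF L] into_EE_tfree[OF L']]
  by (rule restrict_ext)
    (simp add: Ef_rep_add PiE_mem[OF T.F_closed[OF into_EE_tfree[OF L]]]
      PiE_mem[OF T.F_closed[OF into_EE_tfree[OF L']]])

lemma F_A_tlact:
  assumes b: "b \<in> carrier B" and L: "L \<in> tfree A"
  shows "F_A (tlact A (\<iota> b) L) = vlmul A n (\<iota> b) (F_A L)"
proof -
  have "F (tmap into_EE (tlact A (\<iota> b) L)) = F (tlact E (lm (\<iota> b)) (tmap into_EE L))"
    using b L by (intro T.F_tens_eq into_EE_tfree into_EE_tlact A.tfree_tlact E.tfree_tlact lmult_closed)
      simp_all
  also have "\<dots> = vlmul E n (lm (\<iota> b)) (F (tmap into_EE L))"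
    using b by (intro T.F_tlact lmult_closed into_EE_tfree L) simp
  finally show ?thesis
    unfolding F_A_def vlmul_def using b
    by (intro restrict_ext)
      (simp add: Ef_rep_lmult_iota_mult PiE_mem[OF T.F_closed[OF into_EE_tfree[OF L]]])
qed

lemma F_A_tract:
  assumes r: "r \<in> carrier A" and L: "L \<in> tfree A"
  shows "F_A (tract A r L) = vrmul A n (F_A L) r"
proof -
  have "F (tmap into_EE (tract A r L)) = vrmul E n (F (tmap into_EE L)) (lm r)"
    unfolding into_EE_tract[OF r L] using r by (intro T.F_tract into_EE_tfree L) simp
  then show ?thesis
    unfolding F_A_def vrmul_def using r
    by (intro restrict_ext) (simp add: Ef_rep_mult_lmult PiE_mem[OF T.F_closed[OF into_EE_tfree[OF L]]])
qed

lemma G_A_tfree: "v \<in> {..<n} \<rightarrow>\<^sub>E carrier A \<Longrightarrow> G_A v \<in> tfree A"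
  unfolding G_A_def by (intro onto_AA_tfree T.G_tfree lmult_vec_closed)

lemma G_A_vadd:
  assumes "v \<in> {..<n} \<rightarrow>\<^sub>E carrier A" "w \<in> {..<n} \<rightarrow>\<^sub>E carrier A"
  shows "tens_eq A B \<iota> (G_A (vadd A n v w)) (G_A v @ G_A w)"
  unfolding G_A_def lmult_vec_vadd[OF assms] tmap_append[symmetric]
  using assms by (intro tens_eq_tmap[OF _ onto_AA_balanced] T.G_vadd lmult_vec_closed)

lemma G_A_vlmul:
  assumes b: "b \<in> carrier B" and v: "v \<in> {..<n} \<rightarrow>\<^sub>E carrier A"
  shows "tens_eq A B \<iota> (G_A (vlmul A n (\<iota> b) v)) (tlact A (\<iota> b) (G_A v))"
  unfolding G_A_def lmult_vec_vlmul[OF v iota_closed[OF b]]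
    onto_AA_tlact[OF b T.G_tfree[OF lmult_vec_closed[OF v]], symmetric]
  using b v by (intro tens_eq_tmap[OF _ onto_AA_balanced] T.G_vlmul lmult_vec_closed lmult_closed) simp_all

lemma G_A_vrmul:
  assumes r: "r \<in> carrier A" and v: "v \<in> {..<n} \<rightarrow>\<^sub>E carrier A"
  shows "tens_eq A B \<iota> (G_A (vrmul A n v r)) (tract A r (G_A v))"
  unfolding G_A_def lmult_vec_vrmul[OF v r]
  by (rule tens_eq_trans[OF tens_eq_tmap[OF T.G_vrmul onto_AA_balanced] onto_AA_tract])
    (use r v in \<open>simp_all add: lmult_vec_closed T.G_tfree\<close>)

text \<open>\<open>onto_AA (e \<otimes> e')\<close> depends on \<open>e\<close> only through \<open>Ef_rep e\<close>, so replacing the coordinates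
  \<open>u i\<close> of \<open>F\<close> by \<open>lm (Ef_rep (u i))\<close> does not change the image under \<open>onto_AA\<close>.\<close>

lemma G_A_F_A:
  assumes L: "L \<in> tfree A"
  shows "tens_eq A B \<iota> (G_A (F_A L)) L"
proof -
  let ?u = "F (tmap into_EE L)"
  let ?v = "lmult_vec n (\<lambda>i. Ef_rep (?u i))"
  have u: "?u \<in> {..<n} \<rightarrow>\<^sub>E carrier E"
    by (rule T.F_closed[OF into_EE_tfree[OF L]])
  have v: "?v \<in> {..<n} \<rightarrow>\<^sub>E carrier E"
    unfolding lmult_vec_def by (intro PiE_I) (simp_all add: lmult_closed Ef_rep_closed PiE_mem[OF u])
  have "onto_AA (?v i \<otimes>\<^bsub>E\<^esub> x) y = onto_AA (?u i \<otimes>\<^bsub>E\<^esub> x) y"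
    if "i < n" "x \<in> carrier E" "y \<in> carrier E" for i x y
    using that PiE_mem[OF u] Ef_rep_mult_left[of "?u i" x] by (simp add: lmult_vec_def onto_AA_def)
  then have "tens_eq A B \<iota> (tmap onto_AA (G ?v)) (tmap onto_AA (G ?u))"
    using T.tmap_G_cong_tlact[OF E.ring_axioms onto_AA_balanced v _ u] PiE_mem[OF v] PiE_mem[OF u]
    by blast
  also have "tens_eq A B \<iota> \<dots> (tmap onto_AA (tmap into_EE L))"
    by (rule tens_eq_tmap[OF T.G_F[OF into_EE_tfree[OF L]] onto_AA_balanced])
  also have "tens_eq A B \<iota> \<dots> L"
    by (rule onto_AA_into_EE[OF L])
  finally show ?thesis
    by (simp add: G_A_def F_A_def lmult_vec_def cong: restrict_cong)
qed

lemma tensor_retract_A: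
  "tensor_retract A B \<iota> (\<iota> ` carrier B) (carrier A) n F_A G_A"
proof
  fix s L v
  assume "s \<in> \<iota> ` carrier B"
  then obtain b where b: "b \<in> carrier B" and s: "s = \<iota> b"
    by blast
  show "L \<in> tfree A \<Longrightarrow> F_A (tlact A s L) = vlmul A n s (F_A L)"
    unfolding s by (rule F_A_tlact[OF b])
  show "v \<in> {..<n} \<rightarrow>\<^sub>E carrier A \<Longrightarrow> tens_eq A B \<iota> (G_A (vlmul A n s v)) (tlact A s (G_A v))"
    unfolding s by (rule G_A_vlmul[OF b])
qed (fact F_A_closed F_A_tens_eq F_A_append F_A_tract G_A_tfree G_A_vadd G_A_vrmul G_A_F_A)+

end

section \<open>Left D2 for \<open>E | A\<close> gives right D2 for \<open>A | B\<close>\<close>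

locale frobenius_right_transfer = frobenius_dual_basis +
  T: tensor_retract "End_ring A B \<iota>" A "lmult A" "lmult A ` carrier A" "carrier (End_ring A B \<iota>)" n F G
  for n F G
begin

definition into_EE :: "'a \<Rightarrow> 'a \<Rightarrow> (int \<times> ('a \<Rightarrow> 'a) \<times> ('a \<Rightarrow> 'a)) list" where
  "into_EE a a' = [(1, dyad a a', \<one>\<^bsub>E\<^esub>)]"

definition onto_AA :: "('a \<Rightarrow> 'a) \<Rightarrow> ('a \<Rightarrow> 'a) \<Rightarrow> (int \<times> 'a \<times> 'a) list" where
  "onto_AA e e' = End_to_tens (e \<otimes>\<^bsub>E\<^esub> lm (e' \<one>\<^bsub>A\<^esub>))"

definition F_A :: "(int \<times> 'a \<times> 'a) list \<Rightarrow> nat \<Rightarrow> 'a" where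
  "F_A L = (\<lambda>i\<in>{..<n}. F (tmap into_EE L) i \<one>\<^bsub>A\<^esub>)"

definition G_A :: "(nat \<Rightarrow> 'a) \<Rightarrow> (int \<times> 'a \<times> 'a) list" where
  "G_A v = tmap onto_AA (G (lmult_vec n v))"

lemma into_EE_tfree: "L \<in> tfree A \<Longrightarrow> tmap into_EE L \<in> tfree E"
  by (rule tfree_tmap) (auto simp: into_EE_def tfree_def dyad_closed)

lemma into_EE_balanced: "tens_balanced A B \<iota> E A lm into_EE"
  unfolding tens_balanced_def into_EE_def
  using tens_eq_add_left[of _ E _ "\<one>\<^bsub>E\<^esub>" A lm]
  by (simp add: dyad_add_left dyad_add_right dyad_balance dyad_closed tens_eq_refl)

lemma into_EE_tlact:
  assumes s: "s \<in> carrier A" and L: "L \<in> tfree A"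
  shows "tmap into_EE (tlact A s L) = tlact E (lm s) (tmap into_EE L)"
  unfolding tmap_tlact tlact_tmap
proof (rule tmap_cong)
  fix k x y
  assume "(k, x, y) \<in> set L"
  then have "x \<in> carrier A \<and> y \<in> carrier A"
    using L by (rule tfreeD)
  with s show "into_EE (s \<otimes>\<^bsub>A\<^esub> x) y = tlact E (lm s) (into_EE x y)"
    by (simp add: into_EE_def lmult_mult_dyad)
qed

lemma into_EE_tract:
  assumes b: "b \<in> carrier B" and L: "L \<in> tfree A"
  shows "tens_eq E A lm (tmap into_EE (tract A (\<iota> b) L)) (tract E (lm (\<iota> b)) (tmap into_EE L))"
  unfolding tmap_tract tract_tmap
proof (rule tens_eq_tmap_cong)
  fix k x y
  assume "(k, x, y) \<in> set L"
  then have "x \<in> carrier A \<and> y \<in> carrier A"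
    using L by (rule tfreeD)
  then show "tens_eq E A lm (into_EE x (y \<otimes>\<^bsub>A\<^esub> \<iota> b)) (tract E (lm (\<iota> b)) (into_EE x y))"
    using tens_eq_balance[of "dyad x y" E "\<one>\<^bsub>E\<^esub>" "\<iota> b" A lm] b
    by (simp add: into_EE_def dyad_mult_lmult lmult_closed dyad_closed)
qed

lemma onto_AA_tfree: "T \<in> tfree E \<Longrightarrow> tmap onto_AA T \<in> tfree A"
  by (rule tfree_tmap) (simp_all add: onto_AA_def End_to_tens_tfree lmult_closed End_closed)

lemma onto_AA_balanced: "tens_balanced E A lm A B \<iota> onto_AA"
  unfolding tens_balanced_def
proof (intro conjI ballI)
  fix x y z
  assume xyz: "x \<in> carrier E" "y \<in> carrier E" "z \<in> carrier E"
  then have z1: "z \<one>\<^bsub>A\<^esub> \<in> carrier A" "y \<one>\<^bsub>A\<^esub> \<in> carrier A"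
    by (simp_all add: End_closed)
  have "(x \<oplus>\<^bsub>E\<^esub> y) \<otimes>\<^bsub>E\<^esub> lm (z \<one>\<^bsub>A\<^esub>) = x \<otimes>\<^bsub>E\<^esub> lm (z \<one>\<^bsub>A\<^esub>) \<oplus>\<^bsub>E\<^esub> y \<otimes>\<^bsub>E\<^esub> lm (z \<one>\<^bsub>A\<^esub>)"
    using xyz z1 by (simp add: lmult_closed E.l_distr)
  then show "tens_eq A B \<iota> (onto_AA (x \<oplus>\<^bsub>E\<^esub> y) z) (onto_AA x z @ onto_AA y z)"
    using End_to_tens_add[of "x \<otimes>\<^bsub>E\<^esub> lm (z \<one>\<^bsub>A\<^esub>)" "y \<otimes>\<^bsub>E\<^esub> lm (z \<one>\<^bsub>A\<^esub>)"] xyz z1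
    by (simp add: onto_AA_def lmult_closed)
  have "x \<otimes>\<^bsub>E\<^esub> lm ((y \<oplus>\<^bsub>E\<^esub> z) \<one>\<^bsub>A\<^esub>) = x \<otimes>\<^bsub>E\<^esub> lm (y \<one>\<^bsub>A\<^esub>) \<oplus>\<^bsub>E\<^esub> x \<otimes>\<^bsub>E\<^esub> lm (z \<one>\<^bsub>A\<^esub>)"
    using xyz z1 by (simp add: End_add_apply lmult_add lmult_closed E.r_distr)
  then show "tens_eq A B \<iota> (onto_AA x (y \<oplus>\<^bsub>E\<^esub> z)) (onto_AA x y @ onto_AA x z)"
    using End_to_tens_add[of "x \<otimes>\<^bsub>E\<^esub> lm (y \<one>\<^bsub>A\<^esub>)" "x \<otimes>\<^bsub>E\<^esub> lm (z \<one>\<^bsub>A\<^esub>)"] xyz z1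
    by (simp add: onto_AA_def lmult_closed)
next
  fix x z d
  assume xzd: "x \<in> carrier E" "z \<in> carrier E" "d \<in> carrier A"
  then have "(x \<otimes>\<^bsub>E\<^esub> lm d) \<otimes>\<^bsub>E\<^esub> lm (z \<one>\<^bsub>A\<^esub>) = x \<otimes>\<^bsub>E\<^esub> lm ((lm d \<otimes>\<^bsub>E\<^esub> z) \<one>\<^bsub>A\<^esub>)"
    by (simp add: End_mult_apply lmult_apply lmult_mult lmult_closed End_closed E.m_assoc)
  then show "tens_eq A B \<iota> (onto_AA (x \<otimes>\<^bsub>E\<^esub> lm d) z) (onto_AA x (lm d \<otimes>\<^bsub>E\<^esub> z))"
    by (simp add: onto_AA_def tens_eq_refl)
qed

lemma onto_AA_into_EE:
  assumes L: "L \<in> tfree A"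
  shows "tens_eq A B \<iota> (tmap onto_AA (tmap into_EE L)) L"
  unfolding tmap_tmap
proof (rule tens_eq_tmap_ident)
  fix k x y
  assume "(k, x, y) \<in> set L"
  then have xy: "x \<in> carrier A" "y \<in> carrier A"
    using tfreeD[OF _ L] by auto
  moreover have "\<one>\<^bsub>E\<^esub> \<one>\<^bsub>A\<^esub> = \<one>\<^bsub>A\<^esub>"
    by (simp add: End_one)
  ultimately have "tmap onto_AA (into_EE x y) = End_to_tens (dyad x y)"
    by (simp add: into_EE_def onto_AA_def lmult_one dyad_closed)
  then show "tens_eq A B \<iota> (tmap onto_AA (into_EE x y)) [(1, x, y)]"
    using End_to_tens_dyad[OF xy] by simp
qed

lemma onto_AA_tlact:
  assumes s: "s \<in> carrier A" and T: "T \<in> tfree E"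
  shows "tmap onto_AA (tlact E (lm s) T) = tlact A s (tmap onto_AA T)"
  unfolding tmap_tlact tlact_tmap
proof (rule tmap_cong)
  fix k x y
  assume "(k, x, y) \<in> set T"
  then have xy: "x \<in> carrier E" "y \<in> carrier E"
    using tfreeD[OF _ T] by auto
  then have "(lm s \<otimes>\<^bsub>E\<^esub> x) \<otimes>\<^bsub>E\<^esub> lm (y \<one>\<^bsub>A\<^esub>) = lm s \<otimes>\<^bsub>E\<^esub> (x \<otimes>\<^bsub>E\<^esub> lm (y \<one>\<^bsub>A\<^esub>))"
    using s by (simp add: lmult_closed End_closed E.m_assoc)
  then show "onto_AA (lm s \<otimes>\<^bsub>E\<^esub> x) y = tlact A s (onto_AA x y)"
    using xy s by (simp add: onto_AA_def End_to_tens_lmult_mult lmult_closed End_closed)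
qed

lemma onto_AA_tract:
  assumes b: "b \<in> carrier B" and T: "T \<in> tfree E"
  shows "tens_eq A B \<iota> (tmap onto_AA (tract E (lm (\<iota> b)) T)) (tract A (\<iota> b) (tmap onto_AA T))"
  unfolding tmap_tract tract_tmap
proof (rule tens_eq_tmap_cong)
  fix k x y
  assume "(k, x, y) \<in> set T"
  then have xy: "x \<in> carrier E" "y \<in> carrier E"
    using tfreeD[OF _ T] by auto
  then have y1: "y \<one>\<^bsub>A\<^esub> \<in> carrier A"
    by (simp add: End_closed)
  have "(y \<otimes>\<^bsub>E\<^esub> lm (\<iota> b)) \<one>\<^bsub>A\<^esub> = y \<one>\<^bsub>A\<^esub> \<otimes>\<^bsub>A\<^esub> \<iota> b"
    using End_iota[OF xy(2) A.one_closed b] b by (simp add: End_mult_apply lmult_apply)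
  then have "x \<otimes>\<^bsub>E\<^esub> lm ((y \<otimes>\<^bsub>E\<^esub> lm (\<iota> b)) \<one>\<^bsub>A\<^esub>) = (x \<otimes>\<^bsub>E\<^esub> lm (y \<one>\<^bsub>A\<^esub>)) \<otimes>\<^bsub>E\<^esub> lm (\<iota> b)"
    using xy y1 b by (simp add: lmult_mult lmult_closed E.m_assoc)
  then show "tens_eq A B \<iota> (onto_AA x (y \<otimes>\<^bsub>E\<^esub> lm (\<iota> b))) (tract A (\<iota> b) (onto_AA x y))"
    using End_to_tens_mult_lmult[of "x \<otimes>\<^bsub>E\<^esub> lm (y \<one>\<^bsub>A\<^esub>)" "\<iota> b"] xy y1 b
    by (simp add: onto_AA_def lmult_closed)
qed

lemma F_A_closed: "L \<in> tfree A \<Longrightarrow> F_A L \<in> {..<n} \<rightarrow>\<^sub>E carrier A"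
  unfolding F_A_def
  by (intro PiE_I) (simp_all add: End_closed PiE_mem[OF T.F_closed[OF into_EE_tfree]])

lemma F_A_tens_eq:
  "L \<in> tfree A \<Longrightarrow> L' \<in> tfree A \<Longrightarrow> tens_eq A B \<iota> L L' \<Longrightarrow> F_A L = F_A L'"
  unfolding F_A_def
  using T.F_tens_eq[OF into_EE_tfree into_EE_tfree tens_eq_tmap[OF _ into_EE_balanced]] by simp

lemma F_A_append:
  assumes L: "L \<in> tfree A" and L': "L' \<in> tfree A"
  shows "F_A (L @ L') = vadd A n (F_A L) (F_A L')"
  unfolding F_A_def vadd_def tmap_append T.F_append[OF into_EE_tfree[OF L] into_EE_tfree[OF L']]
  by (rule restrict_ext)
    (simp add: End_add_apply PiE_mem[OF T.F_closed[OF into_EE_tfree[OF L]]]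
      PiE_mem[OF T.F_closed[OF into_EE_tfree[OF L']]])

lemma F_A_tlact:
  assumes s: "s \<in> carrier A" and L: "L \<in> tfree A"
  shows "F_A (tlact A s L) = vlmul A n s (F_A L)"
proof -
  have "F (tmap into_EE (tlact A s L)) = vlmul E n (lm s) (F (tmap into_EE L))"
    unfolding into_EE_tlact[OF s L] using s by (intro T.F_tlact into_EE_tfree L) simp
  then show ?thesis
    unfolding F_A_def vlmul_def using s
    by (intro restrict_ext)
      (simp add: End_mult_apply lmult_apply End_closed PiE_mem[OF T.F_closed[OF into_EE_tfree[OF L]]])
qed

lemma F_A_tract:
  assumes b: "b \<in> carrier B" and L: "L \<in> tfree A"
  shows "F_A (tract A (\<iota> b) L) = vrmul A n (F_A L) (\<iota> b)"
proof -
  have "F (tmap into_EE (tract A (\<iota> b) L)) = F (tract E (lm (\<iota> b)) (tmap into_EE L))"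
    using b L by (intro T.F_tens_eq into_EE_tfree into_EE_tract A.tfree_tract E.tfree_tract lmult_closed)
      simp_all
  also have "\<dots> = vrmul E n (F (tmap into_EE L)) (lm (\<iota> b))"
    using b by (intro T.F_tract lmult_closed into_EE_tfree L) simp
  finally have F_tract: "F (tmap into_EE (tract A (\<iota> b) L)) = vrmul E n (F (tmap into_EE L)) (lm (\<iota> b))" .
  have "f (\<iota> b) = f \<one>\<^bsub>A\<^esub> \<otimes>\<^bsub>A\<^esub> \<iota> b" if "f \<in> carrier E" for f
    using End_iota[OF that A.one_closed b] b by simp
  with F_tract show ?thesis
    unfolding F_A_def vrmul_def using b
    by (intro restrict_ext)
      (simp add: End_mult_apply lmult_apply PiE_mem[OF T.F_closed[OF into_EE_tfree[OF L]]])
qed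

lemma G_A_tfree: "v \<in> {..<n} \<rightarrow>\<^sub>E carrier A \<Longrightarrow> G_A v \<in> tfree A"
  unfolding G_A_def by (intro onto_AA_tfree T.G_tfree lmult_vec_closed)

lemma G_A_vadd:
  assumes "v \<in> {..<n} \<rightarrow>\<^sub>E carrier A" "w \<in> {..<n} \<rightarrow>\<^sub>E carrier A"
  shows "tens_eq A B \<iota> (G_A (vadd A n v w)) (G_A v @ G_A w)"
  unfolding G_A_def lmult_vec_vadd[OF assms] tmap_append[symmetric]
  using assms by (intro tens_eq_tmap[OF _ onto_AA_balanced] T.G_vadd lmult_vec_closed)

lemma G_A_vlmul:
  assumes s: "s \<in> carrier A" and v: "v \<in> {..<n} \<rightarrow>\<^sub>E carrier A"
  shows "tens_eq A B \<iota> (G_A (vlmul A n s v)) (tlact A s (G_A v))"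
  unfolding G_A_def lmult_vec_vlmul[OF v s] onto_AA_tlact[OF s T.G_tfree[OF lmult_vec_closed[OF v]], symmetric]
  using s v by (intro tens_eq_tmap[OF _ onto_AA_balanced] T.G_vlmul lmult_vec_closed) simp_all

lemma G_A_vrmul:
  assumes b: "b \<in> carrier B" and v: "v \<in> {..<n} \<rightarrow>\<^sub>E carrier A"
  shows "tens_eq A B \<iota> (G_A (vrmul A n v (\<iota> b))) (tract A (\<iota> b) (G_A v))"
  unfolding G_A_def lmult_vec_vrmul[OF v iota_closed[OF b]]
  by (rule tens_eq_trans[OF tens_eq_tmap[OF T.G_vrmul onto_AA_balanced] onto_AA_tract])
    (use b v in \<open>simp_all add: lmult_vec_closed lmult_closed T.G_tfree\<close>)

text \<open>\<open>onto_AA (e \<otimes> e')\<close> depends on \<open>e'\<close> only through \<open>e' 1\<close>, so replacing the coordinates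
  \<open>u i\<close> of \<open>F\<close> by \<open>lm (u i 1)\<close> does not change the image under \<open>onto_AA\<close>.\<close>

lemma G_A_F_A:
  assumes L: "L \<in> tfree A"
  shows "tens_eq A B \<iota> (G_A (F_A L)) L"
proof -
  let ?u = "F (tmap into_EE L)"
  let ?v = "lmult_vec n (\<lambda>i. ?u i \<one>\<^bsub>A\<^esub>)"
  have u: "?u \<in> {..<n} \<rightarrow>\<^sub>E carrier E"
    by (rule T.F_closed[OF into_EE_tfree[OF L]])
  have v: "?v \<in> {..<n} \<rightarrow>\<^sub>E carrier E"
    unfolding lmult_vec_def by (intro PiE_I) (simp_all add: lmult_closed End_closed PiE_mem[OF u])
  have "onto_AA x (y \<otimes>\<^bsub>E\<^esub> ?v i) = onto_AA x (y \<otimes>\<^bsub>E\<^esub> ?u i)"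
    if "i < n" "x \<in> carrier E" "y \<in> carrier E" for i x y
    using that PiE_mem[OF u] by (simp add: lmult_vec_def onto_AA_def End_mult_apply lmult_apply End_closed)
  then have "tens_eq A B \<iota> (tmap onto_AA (G ?v)) (tmap onto_AA (G ?u))"
    using T.tmap_G_cong_tract[OF E.ring_axioms onto_AA_balanced v _ u] PiE_mem[OF v] PiE_mem[OF u]
    by blast
  also have "tens_eq A B \<iota> \<dots> (tmap onto_AA (tmap into_EE L))"
    by (rule tens_eq_tmap[OF T.G_F[OF into_EE_tfree[OF L]] onto_AA_balanced])
  also have "tens_eq A B \<iota> \<dots> L"
    by (rule onto_AA_into_EE[OF L])
  finally show ?thesis
    by (simp add: G_A_def F_A_def lmult_vec_def cong: restrict_cong)
qed

lemma tensor_retract_A: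
  "tensor_retract A B \<iota> (carrier A) (\<iota> ` carrier B) n F_A G_A"
proof
  fix r L v
  assume "r \<in> \<iota> ` carrier B"
  then obtain b where b: "b \<in> carrier B" and r: "r = \<iota> b"
    by blast
  show "L \<in> tfree A \<Longrightarrow> F_A (tract A r L) = vrmul A n (F_A L) r"
    unfolding r by (rule F_A_tract[OF b])
  show "v \<in> {..<n} \<rightarrow>\<^sub>E carrier A \<Longrightarrow> tens_eq A B \<iota> (G_A (vrmul A n v r)) (tract A r (G_A v))"
    unfolding r by (rule G_A_vrmul[OF b])
qed (fact F_A_closed F_A_tens_eq F_A_append F_A_tlact G_A_tfree G_A_vadd G_A_vlmul G_A_F_A)+

end

context frobenius_dual_basis
begin

lemma left_D2_if_right_D2_End:
  assumes "right_D2 E A lm"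
  shows "left_D2 A B \<iota>"
proof -
  obtain n F G where "tensor_summand E A lm (carrier E) (lm ` carrier A) n F G"
    using assms unfolding right_D2_def by blast
  then interpret transfer: frobenius_left_transfer A B \<iota> \<theta> m xb yb n F G
    by (intro frobenius_left_transfer.intro frobenius_dual_basis_axioms tensor_retract_if_summand)
      unfold_locales
  show ?thesis
    unfolding left_D2_def using tensor_summand_if_retract[OF transfer.tensor_retract_A] by blast
qed

lemma right_D2_if_left_D2_End:
  assumes "left_D2 E A lm"
  shows "right_D2 A B \<iota>"
proof -
  obtain n F G where "tensor_summand E A lm (lm ` carrier A) (carrier E) n F G"
    using assms unfolding left_D2_def by blast
  then interpret transfer: frobenius_right_transfer A B \<iota> \<theta> m xb yb n F G
    by (intro frobenius_right_transfer.intro frobenius_dual_basis_axioms tensor_retract_if_summand)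
      unfold_locales
  show ?thesis
    unfolding right_D2_def using tensor_summand_if_retract[OF transfer.tensor_retract_A] by blast
qed

end

lemma frobenius_setting_if_frobenius_ext:
  assumes "frobenius_ext A B \<iota>" and "ring_ext (End_ring A B \<iota>) A (lmult A)"
  obtains \<theta> where "frobenius_setting A B \<iota> \<theta>"
  using assms unfolding frobenius_ext_def ring_ext_def
  by (blast intro: frobenius_setting.intro frobenius_setting_axioms.intro)

theorem theorem5p7:
  fixes A :: "'a ring" and B :: "'b ring" and \<iota> :: "'b \<Rightarrow> 'a"
  assumes "frobenius_ext A B \<iota>"
    and "generator A B \<iota>"
    and "D2 (End_ring A B \<iota>) A (lmult A)"
  shows "D2 A B \<iota>"
proof -
  from assms(3) have End: "ring_ext (End_ring A B \<iota>) A (lmult A)"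
    and D2_End: "right_D2 (End_ring A B \<iota>) A (lmult A)" "left_D2 (End_ring A B \<iota>) A (lmult A)"
    unfolding D2_def by blast+
  obtain \<theta> where "frobenius_setting A B \<iota> \<theta>"
    using frobenius_setting_if_frobenius_ext[OF assms(1) End] .
  then interpret frobenius_setting A B \<iota> \<theta> .
  obtain m xb yb where "frobenius_dual_basis A B \<iota> \<theta> m xb yb"
    by (rule frobenius_dual_basis_exists)
  then interpret frobenius_dual_basis A B \<iota> \<theta> m xb yb .
  have "ring_ext A B \<iota>"
    using assms(1) by (simp add: frobenius_ext_def)
  with D2_End show ?thesis
    by (simp add: D2_def left_D2_if_right_D2_End right_D2_if_left_D2_End)
qed

end
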